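(* Consider the following family of Block MDPs with horizon $H$ and actions $\{0,1\}$. The policy class $\Pi$ consists of all open-loop policies $\pi\leftrightarrow(a_1,\dots,a_H)\in\{0,1\}^H$, $\pi_h(x)\equiv a_h$. For $\pi^\star\in\Pi$ and $\phi\in\Phi$, the MDP $M_{\pi^\star,\phi}$ has latent states $\mathcal{S}_h=\{g_h,b_h\}$, initial latent state $g_1$, latent transitions $g_h\to g_{h+1}$ if $a=\pi^\star_h$ and every other pair $(s,a)\to b_{h+1}$, and deterministic reward $\mathbb{1}\{s=g_H,a=\pi^\star_H\}$ (zero reward at layers $h<H$). The observation space is $\mathcal{X}_h=\{x_h^{(1)},\dots,x_h^{(m)}\}$ with $m=2^{2H}$; $\Phi$ is the set of decoders $\phi:\mathcal{X}\to\mathcal{S}$ with $\phi(x)=g_1$ for all $x\in\mathcal{X}_1$ and, for every $h\ge2$, exactly $2^H$ observations of $\mathcal{X}_h$ mapped to $g_h$ and the rest to $b_h$; the emission is $\psi(s)=\mathrm{Unif}\{x:\phi(x)=s\}$. Let $\Theta_0=\{(\pi^\star,\phi):\pi^\star_H=0,\phi\in\Phi\}$ and $\Theta_1=\{(\pi^\star,\phi):\pi^\star_H=1,\phi\in\Phi\}$. Let $T=2^{O(H)}$. Then for any deterministic algorithm $\mathsf{Alg}$ that adaptively collects $HT$ samples via generative access, $$D_{\mathrm{TV}}\big(\Pr^{\mathrm{Unif}(\Theta_0),\mathsf{Alg}},\Pr^{\mathrm{Unif}(\Theta_1),\mathsf{Alg}}\big)\le\frac{T^4H}{2^{H-9}}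.$$
   Context: Generative access: the learner may query any $(x,a)\in\mathcal{X}_h\times\{0,1\}$ and receives $x'\sim P(\cdot\mid x,a)=\psi\circ P_{\mathrm{lat}}(\cdot\mid\phi(x),a)$ and reward $r\sim R(x,a)$. Convention: $\mathsf{Alg}$ operates in $T$ rounds, and in each round queries one pair at layer $1$, then layer $2$, ..., then layer $H$ (so $HT$ queries). $\mathsf{Alg}$ is deterministic: each query and its final output policy are deterministic functions of previously observed data. For $\nu\in\Delta(\Theta)$, $\Pr^{\nu,\mathsf{Alg}}$ is the joint law of all queries, responses and the returned policy when $\theta\sim\nu$ is drawn and then $\mathsf{Alg}$ interacts with $M_\theta$. $D_{\mathrm{TV}}$ is total variation distance. *)

theory Defs
  imports "HOL-Probability.Probability"
begin

text \<open>Layers are 1..H. Observation x_h^(i+1) of layer h is encoded by its index i < 2^(2H)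
  (the layer is implicit from the position of the query). Actions 0/1 are False/True.
  A parameter theta = (pstar, G): pstar h is the action of the optimal open-loop policy at
  layer h; G h is the set of observation indices of layer h decoded to g_h (h >= 2);
  all observations of layer 1 decode to g_1.\<close>

type_synonym param = "(nat \<Rightarrow> bool) \<times> (nat \<Rightarrow> nat set)"
type_synonym query = "nat \<times> bool"
type_synonym response = "nat \<times> bool"   \<comment> \<open>(next observation index, reward)\<close>
type_synonym history = "(query \<times> response) list"

definition nobs :: "nat \<Rightarrow> nat" where
  "nobs H = 2 ^ (2 * H)"

text \<open>Theta_b: pstar with pstar H = b, and decoder in Phi (layers 2..H: exactly 2^H good obs).
  Values outside the relevant layers are fixed to canonical defaults.\<close>
definition Theta :: "nat \<Rightarrow> bool \<Rightarrow> param set" where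
  "Theta H b = {(pstar, G).
      (\<forall>h. h \<notin> {1..H} \<longrightarrow> pstar h = False) \<and> pstar H = b \<and>
      (\<forall>h. h \<notin> {2..H} \<longrightarrow> G h = {}) \<and>
      (\<forall>h\<in>{2..H}. G h \<subseteq> {..<nobs H} \<and> card (G h) = 2 ^ H)}"

text \<open>For h < H: next latent is g_{h+1} iff current latent is g_h and a = pstar h; next observation is
  uniform over the observations of layer h+1 with that latent; reward 0.
  For h = H: reward 1{s = g_H, a = pstar H}; there is no next layer (dummy observation 0).\<close>
definition resp :: "nat \<Rightarrow> param \<Rightarrow> nat \<Rightarrow> query \<Rightarrow> response pmf" where
  "resp H \<theta> h qa =
     (let pstar = fst \<theta>; G = snd \<theta>; i = fst qa; a = snd qa;
          good = (if h = 1 then True else i \<in> G h)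
      in if h < H then
           map_pmf (\<lambda>j. (j, False))
             (pmf_of_set {j. j < nobs H \<and> (j \<in> G (Suc h)) = (good \<and> a = pstar h)})
         else return_pmf (0, good \<and> a = pstar h))"

text \<open>Law of the first k query/response pairs of the deterministic algorithm q interacting with
  M_theta; step k (0-based) queries layer (k mod H) + 1, so T rounds = H*T steps.\<close>
primrec run :: "nat \<Rightarrow> (history \<Rightarrow> query) \<Rightarrow> param \<Rightarrow> nat \<Rightarrow> history pmf" where
  "run H q \<theta> 0 = return_pmf []"
| "run H q \<theta> (Suc k) =
     bind_pmf (run H q \<theta> k)
       (\<lambda>hs. map_pmf (\<lambda>r. hs @ [(q hs, r)]) (resp H \<theta> (k mod H + 1) (q hs)))"

text \<open>Joint law Pr^{nu,Alg} of all queries, responses and the returned (open-loop) policy,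
  for theta drawn from nu.\<close>
definition law :: "nat \<Rightarrow> nat \<Rightarrow> (history \<Rightarrow> query) \<Rightarrow> (history \<Rightarrow> bool list) \<Rightarrow> param pmf
                   \<Rightarrow> (history \<times> bool list) pmf" where
  "law H T q out \<nu> = bind_pmf \<nu> (\<lambda>\<theta>. map_pmf (\<lambda>hs. (hs, out hs)) (run H q \<theta> (H * T)))"

definition dTV :: "'a pmf \<Rightarrow> 'a pmf \<Rightarrow> real" where
  "dTV p q = (SUP A. \<bar>measure_pmf.prob p A - measure_pmf.prob q A\<bar>)"

end

theory Submission
  imports Defs "HOL-Combinatorics.Transposition"
begin

text \<open>
  Flipping the last action \<open>pstar H\<close> is a bijection from \<open>Theta H False\<close> onto \<open>Theta H True\<close>
  that changes no response unless the algorithm queries, at layer \<open>H\<close>, an observation decoded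
  to the goal state \<open>g\<^sub>H\<close>. So the total variation distance is at most the average probability
  of such a goal query.

  To bound it, fix a history in which no response repeats an observation already seen at its
  layer, and trace the observation queried at layer \<open>H\<close> back through the responses that produced
  it. That query can only be good if every action along the trace agrees with \<open>pstar\<close> and the
  trace starts at layer 1 or at a never-seen observation that happens to be good. Averaging over
  the decoder by transposing unseen observations, each inner response of the history has
  probability at most \<open>1 / (N - 2T - 1)\<close>, where \<open>N = 2^(2H)\<close> is the number of observations of
  a layer; averaging over \<open>pstar\<close> and the decoder, the traced
  condition holds for at most a \<open>2 / 2^H\<close> fraction of the parameters. As there are at most \<open>N\<close>
  possible responses per inner step, each of the \<open>T\<close> last-layer queries is a goal query with
  averaged probability at most \<open>4 / 2^H\<close>, while a repeated observation occurs with probability at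
  most \<open>2T / 2^H\<close> per step.
\<close>

lemma measure_bind_pmf_of_set:
  assumes "finite S" "S \<noteq> {}"
  shows "measure_pmf.prob (bind_pmf (pmf_of_set S) f) A = (\<Sum>x\<in>S. measure_pmf.prob (f x) A) / card S"
proof -
  have "ennreal (measure_pmf.prob (bind_pmf (pmf_of_set S) f) A) = emeasure (bind_pmf (pmf_of_set S) f) A"
    by (simp add: measure_pmf.emeasure_eq_measure)
  also have "\<dots> = (\<Sum>x\<in>S. emeasure (f x) A) / card S"
    unfolding emeasure_bind_pmf by (rule nn_integral_pmf_of_set[OF assms(2,1)])
  also have "\<dots> = ennreal ((\<Sum>x\<in>S. measure_pmf.prob (f x) A) / card S)"
    using assms by (simp add: measure_pmf.emeasure_eq_measure ennreal_of_nat_eq_real_of_nat divide_ennreal sum_nonneg card_gt_0_iff)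
  finally show ?thesis
    by (simp add: divide_nonneg_nonneg sum_nonneg)
qed

lemma measure_pmf_diff_le_if_pmf_eq_outside:
  assumes "\<And>x. x \<notin> B \<Longrightarrow> pmf p x = pmf p' x"
  shows "\<bar>measure_pmf.prob p X - measure_pmf.prob p' X\<bar> \<le> measure_pmf.prob p B + measure_pmf.prob p' B"
proof -
  have outside: "measure_pmf.prob p (X - B) = measure_pmf.prob p' (X - B)"
    unfolding measure_pmf_conv_infsetsum by (rule infsetsum_cong) (use assms in auto)
  have "measure_pmf.prob M X = measure_pmf.prob M (X - B) + measure_pmf.prob M (X \<inter> B)" for M
    by (subst measure_pmf.finite_measure_Union[symmetric]) (auto intro: arg_cong[where f="measure _"])
  moreover have "measure_pmf.prob M (X \<inter> B) \<le> measure_pmf.prob M B" for M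
    by (rule measure_pmf.finite_measure_mono) auto
  moreover have "measure_pmf.prob M (X \<inter> B) \<ge> 0" for M
    by simp
  ultimately show ?thesis
    using outside by (smt (verit))
qed

lemma dTV_le:
  assumes "\<And>A. \<bar>measure_pmf.prob p A - measure_pmf.prob p' A\<bar> \<le> c"
  shows "dTV p p' \<le> c"
  unfolding dTV_def by (rule cSUP_least) (use assms in auto)

lemma dTV_le_1: "dTV p p' \<le> 1"
proof (rule dTV_le)
  fix A
  have "measure_pmf.prob p A \<le> 1" "measure_pmf.prob p' A \<le> 1"
    by auto
  then show "\<bar>measure_pmf.prob p A - measure_pmf.prob p' A\<bar> \<le> 1"
    by (smt (verit) measure_nonneg)
qed

lemma dTV_self: "dTV p p = 0"
  unfolding dTV_def by simp

lemma inverse_one_minus_power_le_2: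
  fixes x :: real
  assumes "0 \<le> x" and "real n * x \<le> 1 / 2"
  shows "(1 / (1 - x)) ^ n \<le> 2"
proof (cases "n = 0")
  case False
  then have "x \<le> real n * x"
    using assms(1) by (simp add: mult_le_cancel_right1)
  with assms have "x \<le> 1 / 2"
    by linarith
  then have "1 - real n * x \<le> (1 - x) ^ n"
    using Bernoulli_inequality[of "- x" n] by simp
  with assms(2) \<open>x \<le> 1 / 2\<close> have "1 / (1 - x) ^ n \<le> 2"
    by (simp add: divide_le_eq mult.commute)
  then show ?thesis
    by (simp add: power_one_over)
qed simp

lemma steps_times_seen_le_half:
  fixes H T :: nat
  assumes small: "512 * real H * real T ^ 4 < 2 ^ H" and T: "1 \<le> T"
  shows "real H * real T * (2 * real T + 1) \<le> 2 ^ H / 2"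
proof -
  have T_pow: "real T \<le> real T ^ 2" "real T ^ 2 \<le> real T ^ 4"
    using T power_increasing[of 1 2 "real T"] power_increasing[of 2 4 "real T"] by simp_all
  have "real H * real T * (2 * real T + 1) = 2 * (real H * real T ^ 2) + real H * real T"
    by (simp add: power2_eq_square algebra_simps)
  also have "\<dots> \<le> 3 * (real H * real T ^ 4)"
    using T_pow by (smt (verit) mult_left_mono of_nat_0_le_iff)
  also have "\<dots> \<le> 2 ^ H / 2"
  proof -
    have "0 \<le> real H * real T ^ 4"
      by simp
    then show ?thesis
      using small unfolding mult.assoc by linarith
  qed
  finally show ?thesis .
qed

lemma quadratic_le_quartic:
  fixes H T :: nat
  assumes "1 \<le> H" and "1 \<le> T"
  shows "4 * real H * real T ^ 2 + 8 * real T \<le> 512 * real H * real T ^ 4"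
proof -
  have T_pow: "real T \<le> real T ^ 4" "real T ^ 2 \<le> real T ^ 4"
    using assms(2) power_increasing[of 1 4 "real T"] power_increasing[of 2 4 "real T"] by simp_all
  have "real H * real T ^ 2 \<le> real H * real T ^ 4"
    using T_pow by (intro mult_left_mono) auto
  moreover have "real T ^ 4 \<le> real H * real T ^ 4"
    using assms(1) by (intro mult_right_mono[of 1 "real H", simplified]) auto
  moreover have "0 \<le> real H * real T ^ 4"
    by simp
  ultimately have "4 * (real H * real T ^ 2) + 8 * real T \<le> 512 * (real H * real T ^ 4)"
    using T_pow by linarith
  then show ?thesis
    by (simp add: mult.assoc)
qed

lemma nobs_eq_square: "nobs H = 2 ^ H * 2 ^ H"
  unfolding nobs_def by (simp add: power_add[symmetric] mult_2)

lemma Theta_memD: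
  assumes "(p, G) \<in> Theta H b"
  shows "\<And>h. h \<notin> {1..H} \<Longrightarrow> p h = False" "\<And>h. h \<notin> {2..H} \<Longrightarrow> G h = {}"
    "\<And>h. h \<in> {2..H} \<Longrightarrow> G h \<subseteq> {..<nobs H}" "\<And>h. h \<in> {2..H} \<Longrightarrow> card (G h) = 2 ^ H"
  using assms unfolding Theta_def by auto

lemma finite_Theta: "finite (Theta H b)"
proof (rule finite_subset)
  let ?P = "(\<lambda>S h. h \<in> S) ` Pow {1..H}"
  let ?G = "(\<lambda>R h. {x. (h, x) \<in> R}) ` Pow ({2..H} \<times> {..<nobs H})"
  show "Theta H b \<subseteq> ?P \<times> ?G"
  proof safe
    fix p G assume \<theta>: "(p, G) \<in> Theta H b"
    have "p = (\<lambda>h. h \<in> {h \<in> {1..H}. p h})"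
      using Theta_memD(1)[OF \<theta>] by fastforce
    then show "p \<in> ?P"
      by blast
    have "G = (\<lambda>h. {x. (h, x) \<in> {(h, x). h \<in> {2..H} \<and> x \<in> G h}})"
      using Theta_memD(2)[OF \<theta>] by fastforce
    moreover have "{(h, x). h \<in> {2..H} \<and> x \<in> G h} \<subseteq> {2..H} \<times> {..<nobs H}"
      using Theta_memD(3)[OF \<theta>] by fastforce
    ultimately show "G \<in> ?G"
      by blast
  qed
qed auto

lemma Theta_nonempty:
  assumes "H \<ge> 1"
  shows "Theta H b \<noteq> {}"
proof -
  have "2 ^ H \<le> nobs H"
    unfolding nobs_eq_square by simp
  then have "(\<lambda>h. h = H \<and> b, \<lambda>h. if h \<in> {2..H} then {..<2 ^ H} else {}) \<in> Theta H b"
    unfolding Theta_def using assms by auto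
  then show ?thesis
    by blast
qed

lemma set_pmf_run_iff:
  "hs \<in> set_pmf (run H q \<theta> k) \<longleftrightarrow> length hs = k \<and>
     (\<forall>j<k. fst (hs!j) = q (take j hs) \<and> snd (hs!j) \<in> set_pmf (resp H \<theta> (j mod H + 1) (fst (hs!j))))"
proof (induction k arbitrary: hs)
  case (Suc k)
  show ?case
  proof (cases hs rule: rev_cases)
    case (snoc hs0 x)
    have "hs0 @ [x] \<in> set_pmf (run H q \<theta> (Suc k)) \<longleftrightarrow>
        hs0 \<in> set_pmf (run H q \<theta> k) \<and> fst x = q hs0 \<and> snd x \<in> set_pmf (resp H \<theta> (k mod H + 1) (q hs0))"
      by (cases x) auto
    then show ?thesis
      unfolding snoc Suc.IH by (auto simp: nth_append less_Suc_eq)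
  qed auto
qed simp

lemma pmf_run_length_neq: "length hs \<noteq> k \<Longrightarrow> pmf (run H q \<theta> k) hs = 0"
  by (metis set_pmf_run_iff set_pmf_iff)

lemma pmf_run_snoc:
  "pmf (run H q \<theta> (Suc k)) (hs @ [x]) =
     pmf (run H q \<theta> k) hs * (if fst x = q hs then pmf (resp H \<theta> (k mod H + 1) (q hs)) (snd x) else 0)"
proof -
  define c where "c = (if fst x = q hs then pmf (resp H \<theta> (k mod H + 1) (q hs)) (snd x) else 0)"
  have "pmf (map_pmf (\<lambda>r. hs' @ [(q hs', r)]) (resp H \<theta> (k mod H + 1) (q hs'))) (hs @ [x])
      = indicator {hs} hs' * c" for hs'
  proof (cases "hs' = hs \<and> fst x = q hs")
    case True
    have "inj (\<lambda>r. hs @ [(q hs, r)])"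
      by (auto intro: injI)
    then have "pmf (map_pmf (\<lambda>r. hs @ [(q hs, r)]) (resp H \<theta> (k mod H + 1) (q hs))) (hs @ [(q hs, snd x)])
        = pmf (resp H \<theta> (k mod H + 1) (q hs)) (snd x)"
      by (rule pmf_map_inj')
    moreover have "hs @ [x] = hs @ [(q hs, snd x)]"
      using True by (cases x) auto
    ultimately show ?thesis
      using True unfolding c_def by simp
  next
    case False
    then have "hs @ [x] \<notin> (\<lambda>r. hs' @ [(q hs', r)]) ` set_pmf (resp H \<theta> (k mod H + 1) (q hs'))"
      by (cases x) auto
    then show ?thesis
      using False unfolding c_def by (auto simp: pmf_map_outside indicator_def)
  qed
  then show ?thesis
    unfolding c_def[symmetric] by (simp add: pmf_bind measure_pmf_single)
qed

lemma map_pmf_take_run: "k \<le> n \<Longrightarrow> map_pmf (take k) (run H q \<theta> n) = run H q \<theta> k"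
proof (induction n)
  case (Suc n)
  show ?case
  proof (cases "k = Suc n")
    case True
    have "map_pmf (take k) (run H q \<theta> (Suc n)) = map_pmf id (run H q \<theta> (Suc n))"
      by (rule map_pmf_cong) (auto simp: True set_pmf_run_iff)
    then show ?thesis
      using True by simp
  next
    case False
    then have "k \<le> n"
      using Suc.prems by simp
    have "map_pmf (take k) (run H q \<theta> (Suc n)) = bind_pmf (run H q \<theta> n) (\<lambda>hs. return_pmf (take k hs))"
      unfolding run.simps map_bind_pmf
    proof (rule bind_pmf_cong[OF refl])
      fix hs assume "hs \<in> set_pmf (run H q \<theta> n)"
      then have "take k (hs @ [(q hs, r)]) = take k hs" for r
        using \<open>k \<le> n\<close> by (simp add: set_pmf_run_iff)
      then show "map_pmf (take k) (map_pmf (\<lambda>r. hs @ [(q hs, r)]) (resp H \<theta> (n mod H + 1) (q hs)))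
          = return_pmf (take k hs)"
        by (simp add: pmf.map_comp o_def)
    qed
    then show ?thesis
      using Suc.IH \<open>k \<le> n\<close> by (simp add: map_pmf_def)
  qed
qed simp

definition consistent :: "(history \<Rightarrow> query) \<Rightarrow> history \<Rightarrow> bool" where
  "consistent q hs \<longleftrightarrow> (\<forall>j<length hs. fst (hs!j) = q (take j hs))"

lemma consistent_snoc: "consistent q (hs @ [x]) \<longleftrightarrow> consistent q hs \<and> fst x = q hs"
  unfolding consistent_def by (auto simp: nth_append less_Suc_eq)

lemma pmf_run_eq_prod:
  "pmf (run H q \<theta> (length hs)) hs = (if consistent q hs
     then \<Prod>j<length hs. pmf (resp H \<theta> (j mod H + 1) (fst (hs!j))) (snd (hs!j)) else 0)"
proof (induction hs rule: rev_induct)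
  case (snoc x hs)
  have "(\<Prod>j<length hs. pmf (resp H \<theta> (j mod H + 1) (fst ((hs @ [x])!j))) (snd ((hs @ [x])!j)))
      = (\<Prod>j<length hs. pmf (resp H \<theta> (j mod H + 1) (fst (hs!j))) (snd (hs!j)))"
    by (rule prod.cong) (auto simp: nth_append)
  moreover have "pmf (run H q \<theta> (length (hs @ [x]))) (hs @ [x]) = pmf (run H q \<theta> (length hs)) hs *
      (if fst x = q hs then pmf (resp H \<theta> (length hs mod H + 1) (q hs)) (snd x) else 0)"
    by (simp only: length_append_singleton pmf_run_snoc)
  ultimately show ?case
    using snoc.IH by (auto simp: consistent_snoc)
qed (simp add: consistent_def)

locale hard_instance =
  fixes H T :: nat and q :: "history \<Rightarrow> query"
  assumes two_le_H: "2 \<le> H"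
begin

abbreviation "N \<equiv> nobs H"
abbreviation "K \<equiv> (2::nat) ^ H"

lemma two_K_le_N: "2 * K \<le> N"
proof -
  have "(2::nat) ^ 1 \<le> K"
    using two_le_H by (intro power_increasing) auto
  then show ?thesis
    unfolding nobs_eq_square by simp
qed

lemma K_less_N: "K < N"
  using two_K_le_N by (simp add: less_le_trans[of _ "2 * K"])

definition hist_prob :: "param \<Rightarrow> history \<Rightarrow> real" where
  "hist_prob \<theta> hs = pmf (run H q \<theta> (length hs)) hs"

definition good_obs :: "param \<Rightarrow> nat \<Rightarrow> nat \<Rightarrow> bool" where
  "good_obs \<theta> h x \<longleftrightarrow> h = 1 \<or> x \<in> snd \<theta> h"

definition on_path :: "param \<Rightarrow> nat \<Rightarrow> query \<Rightarrow> bool" where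
  "on_path \<theta> h qa \<longleftrightarrow> good_obs \<theta> h (fst qa) \<and> snd qa = fst \<theta> h"

lemma hist_prob_Nil: "hist_prob \<theta> [] = 1"
  unfolding hist_prob_def by simp

lemma hist_prob_nonneg: "hist_prob \<theta> hs \<ge> 0"
  unfolding hist_prob_def by simp

lemma hist_prob_snoc:
  "hist_prob \<theta> (hs @ [x]) =
     hist_prob \<theta> hs * (if fst x = q hs then pmf (resp H \<theta> (length hs mod H + 1) (q hs)) (snd x) else 0)"
  unfolding hist_prob_def by (simp only: length_append_singleton pmf_run_snoc)

lemma hist_prob_eq_prod:
  "hist_prob \<theta> hs = (if consistent q hs
     then \<Prod>j<length hs. pmf (resp H \<theta> (j mod H + 1) (fst (hs!j))) (snd (hs!j)) else 0)"
  unfolding hist_prob_def by (rule pmf_run_eq_prod)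

lemma good_obs_subset: "\<theta> \<in> Theta H b \<Longrightarrow> h \<in> {2..H} \<Longrightarrow> snd \<theta> h \<subseteq> {..<N}"
  using Theta_memD(3)[of "fst \<theta>" "snd \<theta>"] by auto

lemma card_good_obs: "\<theta> \<in> Theta H b \<Longrightarrow> h \<in> {2..H} \<Longrightarrow> card (snd \<theta> h) = K"
  using Theta_memD(4)[of "fst \<theta>" "snd \<theta>"] by auto

lemma card_bad_obs:
  assumes "\<theta> \<in> Theta H b" and "h \<in> {2..H}"
  shows "card ({..<N} - snd \<theta> h) = N - K"
proof -
  have sub: "snd \<theta> h \<subseteq> {..<N}"
    by (rule good_obs_subset[OF assms])
  show ?thesis
    using card_Diff_subset[OF finite_subset[OF sub] sub] card_good_obs[OF assms] by simp
qed

definition next_obs :: "param \<Rightarrow> nat \<Rightarrow> query \<Rightarrow> nat set" where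
  "next_obs \<theta> h qa = {j. j < N \<and> (j \<in> snd \<theta> (Suc h)) = on_path \<theta> h qa}"

lemma card_next_obs:
  assumes "\<theta> \<in> Theta H b" and "1 \<le> h" "h < H"
  shows "card (next_obs \<theta> h qa) = (if on_path \<theta> h qa then K else N - K)"
proof -
  have "next_obs \<theta> h qa = (if on_path \<theta> h qa then snd \<theta> (Suc h) else {..<N} - snd \<theta> (Suc h))"
    unfolding next_obs_def using good_obs_subset[OF assms(1), of "Suc h"] assms(2,3) by auto
  then show ?thesis
    using assms card_good_obs card_bad_obs by simp
qed

lemma K_le_card_next_obs:
  assumes "\<theta> \<in> Theta H b" and "1 \<le> h" "h < H"
  shows "K \<le> card (next_obs \<theta> h qa)"
  unfolding card_next_obs[OF assms] using two_K_le_N by (simp; linarith)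

lemma finite_next_obs: "finite (next_obs \<theta> h qa)"
  unfolding next_obs_def by simp

lemma next_obs_nonempty:
  assumes "\<theta> \<in> Theta H b" and "1 \<le> h" "h < H"
  shows "next_obs \<theta> h qa \<noteq> {}"
proof -
  have "(0::nat) < K"
    by simp
  then have "0 < card (next_obs \<theta> h qa)"
    using K_le_card_next_obs[OF assms] by (rule less_le_trans)
  then show ?thesis
    by auto
qed

lemma resp_inner_eq:
  "1 \<le> h \<Longrightarrow> h < H \<Longrightarrow> resp H \<theta> h qa = map_pmf (\<lambda>j. (j, False)) (pmf_of_set (next_obs \<theta> h qa))"
  unfolding resp_def next_obs_def on_path_def good_obs_def Let_def by (simp cong: conj_cong)

lemma pmf_resp_inner:
  assumes \<theta>: "\<theta> \<in> Theta H b" and h: "1 \<le> h" "h < H"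
  shows "pmf (resp H \<theta> h qa) rr = (if \<not> snd rr \<and> fst rr < N \<and> (fst rr \<in> snd \<theta> (Suc h)) = on_path \<theta> h qa
     then 1 / real (if on_path \<theta> h qa then K else N - K) else 0)"
proof (cases rr)
  case (Pair r flag)
  let ?A = "next_obs \<theta> h qa"
  have "pmf (pmf_of_set ?A) r = indicator ?A r / card ?A"
    using next_obs_nonempty[OF assms] by (simp add: finite_next_obs)
  moreover have "pmf (map_pmf (\<lambda>j. (j, False)) (pmf_of_set ?A)) (r, False) = pmf (pmf_of_set ?A) r"
    by (rule pmf_map_inj') (auto intro: injI)
  moreover have "pmf (map_pmf (\<lambda>j. (j, False)) (pmf_of_set ?A)) (r, True) = 0"
    by (rule pmf_map_outside) auto
  ultimately show ?thesis
    unfolding Pair resp_inner_eq[OF h] card_next_obs[OF assms]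
    by (cases flag) (auto simp: next_obs_def indicator_def)
qed

lemma pmf_resp_inner_False:
  assumes "\<theta> \<in> Theta H b" and "1 \<le> h" "h < H" and "r < N"
  shows "pmf (resp H \<theta> h qa) (r, False) =
     of_bool (on_path \<theta> h qa) * of_bool (r \<in> snd \<theta> (Suc h)) / real K
   + of_bool (\<not> on_path \<theta> h qa) * of_bool (r \<notin> snd \<theta> (Suc h)) / real (N - K)"
  unfolding pmf_resp_inner[OF assms(1-3)] using assms(4) by auto

lemma pmf_resp_last:
  "pmf (resp H \<theta> H qa) rr = (if rr = (0, fst qa \<in> snd \<theta> H \<and> snd qa = fst \<theta> H) then 1 else 0)"
  using two_le_H unfolding resp_def Let_def by (simp add: pmf_return)

section \<open>Symmetries of the parameter sets\<close>

definition swap_obs :: "nat \<Rightarrow> nat \<Rightarrow> nat \<Rightarrow> param \<Rightarrow> param" where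
  "swap_obs l r r' \<theta> = (fst \<theta>, (snd \<theta>)(l := Transposition.transpose r r' ` snd \<theta> l))"

lemma fst_swap_obs [simp]: "fst (swap_obs l r r' \<theta>) = fst \<theta>"
  unfolding swap_obs_def by simp

lemma mem_swap_obs_iff:
  "i \<in> snd (swap_obs l r r' \<theta>) l' \<longleftrightarrow>
     (if l' = l then Transposition.transpose r r' i \<in> snd \<theta> l else i \<in> snd \<theta> l')"
  unfolding swap_obs_def by (simp add: in_transpose_image_iff)

lemma swap_obs_swap_obs [simp]: "swap_obs l r r' (swap_obs l r r' \<theta>) = \<theta>"
  unfolding swap_obs_def by (auto simp: image_image)

lemma swap_obs_Theta:
  assumes \<theta>: "\<theta> \<in> Theta H b" and l: "l \<in> {2..H}" and "r < N" "r' < N"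
  shows "swap_obs l r r' \<theta> \<in> Theta H b"
proof -
  have "Transposition.transpose r r' ` snd \<theta> l \<subseteq> {..<N}"
    using good_obs_subset[OF \<theta> l] assms(3,4) by (auto simp: Transposition.transpose_def)
  moreover have "card (Transposition.transpose r r' ` snd \<theta> l) = K"
    using card_good_obs[OF \<theta> l] by (simp add: card_image)
  moreover obtain p G where "\<theta> = (p, G)"
    by fastforce
  ultimately show ?thesis
    using \<theta> l unfolding Theta_def swap_obs_def by auto
qed

lemma sum_swap_obs_eq:
  assumes l: "l \<in> {2..H}" and "r < N" "r' < N"
    and inv: "\<And>\<theta>. \<theta> \<in> Theta H b \<Longrightarrow> F (swap_obs l r r' \<theta>) = F \<theta>"
  shows "(\<Sum>\<theta>\<in>Theta H b. F \<theta> * of_bool (P (r \<in> snd \<theta> l)))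
       = (\<Sum>\<theta>\<in>Theta H b. F \<theta> * of_bool (P (r' \<in> snd \<theta> l)))"
proof -
  have "(\<Sum>\<theta>\<in>Theta H b. F \<theta> * of_bool (P (r \<in> snd \<theta> l)))
      = (\<Sum>\<theta>\<in>Theta H b. F (swap_obs l r r' \<theta>) * of_bool (P (r \<in> snd (swap_obs l r r' \<theta>) l)))"
    by (rule sum.reindex_bij_witness[of _ "swap_obs l r r'" "swap_obs l r r'"])
       (auto intro: swap_obs_Theta[OF _ assms(1-3)])
  also have "\<dots> = (\<Sum>\<theta>\<in>Theta H b. F \<theta> * of_bool (P (r' \<in> snd \<theta> l)))"
    using inv by (intro sum.cong) (simp_all add: mem_swap_obs_iff)
  finally show ?thesis .
qed

lemma sum_swap_obs_le:
  fixes F :: "param \<Rightarrow> real"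
  assumes l: "l \<in> {2..H}" and U: "U \<subseteq> {..<N}" "r \<in> U" and F_nonneg: "\<And>\<theta>. F \<theta> \<ge> 0"
    and inv: "\<And>r' \<theta>. r' \<in> U \<Longrightarrow> \<theta> \<in> Theta H b \<Longrightarrow> F (swap_obs l r r' \<theta>) = F \<theta>"
    and count: "\<And>\<theta>. \<theta> \<in> Theta H b \<Longrightarrow> card {r'\<in>U. P (r' \<in> snd \<theta> l)} \<le> c"
  shows "card U * (\<Sum>\<theta>\<in>Theta H b. F \<theta> * of_bool (P (r \<in> snd \<theta> l))) \<le> c * (\<Sum>\<theta>\<in>Theta H b. F \<theta>)"
proof -
  have fin: "finite U"
    using U(1) finite_subset by blast
  have "card U * (\<Sum>\<theta>\<in>Theta H b. F \<theta> * of_bool (P (r \<in> snd \<theta> l)))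
      = (\<Sum>r'\<in>U. \<Sum>\<theta>\<in>Theta H b. F \<theta> * of_bool (P (r \<in> snd \<theta> l)))"
    by simp
  also have "\<dots> = (\<Sum>r'\<in>U. \<Sum>\<theta>\<in>Theta H b. F \<theta> * of_bool (P (r' \<in> snd \<theta> l)))"
    using U inv by (intro sum.cong refl sum_swap_obs_eq[OF l]) auto
  also have "\<dots> = (\<Sum>\<theta>\<in>Theta H b. F \<theta> * card {r'\<in>U. P (r' \<in> snd \<theta> l)})"
    using fin by (subst sum.swap) (simp add: sum_distrib_left[symmetric] sum_of_bool_eq Collect_conj_eq Int_commute)
  also have "\<dots> \<le> (\<Sum>\<theta>\<in>Theta H b. F \<theta> * c)"
    using F_nonneg count by (intro sum_mono mult_left_mono) auto
  also have "\<dots> = c * (\<Sum>\<theta>\<in>Theta H b. F \<theta>)"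
    by (simp add: sum_distrib_left mult.commute)
  finally show ?thesis .
qed

lemma sum_swap_obs_good_le:
  fixes F :: "param \<Rightarrow> real"
  assumes l: "l \<in> {2..H}" and U: "U \<subseteq> {..<N}" "r \<in> U" and "\<And>\<theta>. F \<theta> \<ge> 0"
    and "\<And>r' \<theta>. r' \<in> U \<Longrightarrow> \<theta> \<in> Theta H b \<Longrightarrow> F (swap_obs l r r' \<theta>) = F \<theta>"
  shows "card U * (\<Sum>\<theta>\<in>Theta H b. F \<theta> * of_bool (r \<in> snd \<theta> l)) \<le> K * (\<Sum>\<theta>\<in>Theta H b. F \<theta>)"
proof -
  have "card {r'\<in>U. r' \<in> snd \<theta> l} \<le> K" if \<theta>: "\<theta> \<in> Theta H b" for \<theta>
  proof -
    have "card {r'\<in>U. r' \<in> snd \<theta> l} \<le> card (snd \<theta> l)"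
      using good_obs_subset[OF \<theta> l] finite_subset by (intro card_mono) auto
    then show ?thesis
      using card_good_obs[OF \<theta> l] by simp
  qed
  then show ?thesis
    using sum_swap_obs_le[OF assms, where P = "\<lambda>x. x" and c = K] by simp
qed

lemma sum_swap_obs_bad_le:
  fixes F :: "param \<Rightarrow> real"
  assumes l: "l \<in> {2..H}" and U: "U \<subseteq> {..<N}" "r \<in> U" and "\<And>\<theta>. F \<theta> \<ge> 0"
    and "\<And>r' \<theta>. r' \<in> U \<Longrightarrow> \<theta> \<in> Theta H b \<Longrightarrow> F (swap_obs l r r' \<theta>) = F \<theta>"
  shows "card U * (\<Sum>\<theta>\<in>Theta H b. F \<theta> * of_bool (r \<notin> snd \<theta> l)) \<le> (N - K) * (\<Sum>\<theta>\<in>Theta H b. F \<theta>)"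
proof -
  have "card {r'\<in>U. r' \<notin> snd \<theta> l} \<le> N - K" if \<theta>: "\<theta> \<in> Theta H b" for \<theta>
  proof -
    have "card {r'\<in>U. r' \<notin> snd \<theta> l} \<le> card ({..<N} - snd \<theta> l)"
      using U by (intro card_mono) auto
    then show ?thesis
      using card_bad_obs[OF \<theta> l] by simp
  qed
  then show ?thesis
    using sum_swap_obs_le[OF assms, where P = Not and c = "N - K"] by simp
qed

text \<open>Transposing \<open>r\<close> with another fresh observation leaves the weight \<open>F\<close> unchanged, so on
  average the response \<open>r\<close> is no likelier than any of the \<open>card U\<close> fresh observations.\<close>

lemma sum_pmf_resp_fresh_le:
  fixes F :: "param \<Rightarrow> real"
  assumes h: "1 \<le> h" "h < H" and U: "U \<subseteq> {..<N}" "r \<in> U" and F_nonneg: "\<And>\<theta>. F \<theta> \<ge> 0"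
    and inv: "\<And>r' \<theta>. r' \<in> U \<Longrightarrow> \<theta> \<in> Theta H b \<Longrightarrow> F (swap_obs (Suc h) r r' \<theta>) = F \<theta>"
  shows "card U * (\<Sum>\<theta>\<in>Theta H b. F \<theta> * pmf (resp H \<theta> h qa) (r, False)) \<le> (\<Sum>\<theta>\<in>Theta H b. F \<theta>)"
proof -
  define F1 where "F1 = (\<lambda>\<theta>. F \<theta> * of_bool (on_path \<theta> h qa))"
  define F2 where "F2 = (\<lambda>\<theta>. F \<theta> * of_bool (\<not> on_path \<theta> h qa))"
  have l: "Suc h \<in> {2..H}"
    using h by auto
  have F12_nonneg: "F1 \<theta> \<ge> 0" "F2 \<theta> \<ge> 0" for \<theta>
    unfolding F1_def F2_def using F_nonneg by simp_all
  have "on_path (swap_obs (Suc h) r r' \<theta>) h qa = on_path \<theta> h qa" for r' \<theta>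
    unfolding on_path_def good_obs_def by (simp add: mem_swap_obs_iff)
  then have F12_inv: "F1 (swap_obs (Suc h) r r' \<theta>) = F1 \<theta>" "F2 (swap_obs (Suc h) r r' \<theta>) = F2 \<theta>"
    if "r' \<in> U" "\<theta> \<in> Theta H b" for r' \<theta>
    unfolding F1_def F2_def using inv that by simp_all
  have "(\<Sum>\<theta>\<in>Theta H b. F \<theta> * pmf (resp H \<theta> h qa) (r, False))
      = (\<Sum>\<theta>\<in>Theta H b. F1 \<theta> * of_bool (r \<in> snd \<theta> (Suc h))) / K
      + (\<Sum>\<theta>\<in>Theta H b. F2 \<theta> * of_bool (r \<notin> snd \<theta> (Suc h))) / (N - K)"
    unfolding sum_divide_distrib sum.distrib[symmetric]
  proof (intro sum.cong refl)
    fix \<theta> assume \<theta>: "\<theta> \<in> Theta H b"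
    have r: "r < N"
      using U by auto
    show "F \<theta> * pmf (resp H \<theta> h qa) (r, False)
        = F1 \<theta> * of_bool (r \<in> snd \<theta> (Suc h)) / K + F2 \<theta> * of_bool (r \<notin> snd \<theta> (Suc h)) / (N - K)"
      unfolding pmf_resp_inner_False[OF \<theta> h r] F1_def F2_def by (simp add: algebra_simps)
  qed
  then have "card U * (\<Sum>\<theta>\<in>Theta H b. F \<theta> * pmf (resp H \<theta> h qa) (r, False))
      = card U * (\<Sum>\<theta>\<in>Theta H b. F1 \<theta> * of_bool (r \<in> snd \<theta> (Suc h))) / K
      + card U * (\<Sum>\<theta>\<in>Theta H b. F2 \<theta> * of_bool (r \<notin> snd \<theta> (Suc h))) / (N - K)"
    by (simp add: distrib_left)
  also have "\<dots> \<le> (\<Sum>\<theta>\<in>Theta H b. F1 \<theta>) + (\<Sum>\<theta>\<in>Theta H b. F2 \<theta>)"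
  proof (intro add_mono)
    show "card U * (\<Sum>\<theta>\<in>Theta H b. F1 \<theta> * of_bool (r \<in> snd \<theta> (Suc h))) / K \<le> (\<Sum>\<theta>\<in>Theta H b. F1 \<theta>)"
      using sum_swap_obs_good_le[OF l U F12_nonneg(1) F12_inv(1)] by (simp add: divide_le_eq mult.commute)
    have "real (N - K) > 0"
      using K_less_N by simp
    then show "card U * (\<Sum>\<theta>\<in>Theta H b. F2 \<theta> * of_bool (r \<notin> snd \<theta> (Suc h))) / (N - K) \<le> (\<Sum>\<theta>\<in>Theta H b. F2 \<theta>)"
      using sum_swap_obs_bad_le[OF l U F12_nonneg(2) F12_inv(2)] by (simp add: divide_le_eq mult.commute)
  qed
  also have "\<dots> = (\<Sum>\<theta>\<in>Theta H b. F \<theta>)"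
    unfolding F1_def F2_def sum.distrib[symmetric] by (intro sum.cong) auto
  finally show ?thesis .
qed

definition flip_action :: "nat \<Rightarrow> param \<Rightarrow> param" where
  "flip_action l \<theta> = ((fst \<theta>)(l := \<not> fst \<theta> l), snd \<theta>)"

lemma flip_action_flip_action [simp]: "flip_action l (flip_action l \<theta>) = \<theta>"
  unfolding flip_action_def by auto

lemma flip_action_Theta: "\<theta> \<in> Theta H b \<Longrightarrow> 1 \<le> l \<Longrightarrow> l < H \<Longrightarrow> flip_action l \<theta> \<in> Theta H b"
  unfolding Theta_def flip_action_def by (auto simp: subset_iff)

lemma flip_action_last_Theta: "\<theta> \<in> Theta H b \<Longrightarrow> flip_action H \<theta> \<in> Theta H (\<not> b)"
  unfolding Theta_def flip_action_def using two_le_H by (auto simp: subset_iff)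

lemma bij_betw_flip_action_last: "bij_betw (flip_action H) (Theta H False) (Theta H True)"
  by (rule bij_betw_byWitness[of _ "flip_action H"]) (auto dest: flip_action_last_Theta)

lemma sum_action_eq_half:
  fixes F :: "param \<Rightarrow> real"
  assumes l: "1 \<le> l" "l < H" and inv: "\<And>\<theta>. \<theta> \<in> Theta H b \<Longrightarrow> F (flip_action l \<theta>) = F \<theta>"
  shows "(\<Sum>\<theta>\<in>Theta H b. F \<theta> * of_bool (fst \<theta> l = a)) = (\<Sum>\<theta>\<in>Theta H b. F \<theta>) / 2"
proof -
  have "(\<Sum>\<theta>\<in>Theta H b. F \<theta> * of_bool (fst \<theta> l = a))
      = (\<Sum>\<theta>\<in>Theta H b. F (flip_action l \<theta>) * of_bool (fst (flip_action l \<theta>) l = a))"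
    by (rule sum.reindex_bij_witness[of _ "flip_action l" "flip_action l"])
       (auto intro: flip_action_Theta[OF _ l])
  also have "\<dots> = (\<Sum>\<theta>\<in>Theta H b. F \<theta> * of_bool (fst \<theta> l = (\<not> a)))"
    using inv by (intro sum.cong) (auto simp: flip_action_def)
  finally have "2 * (\<Sum>\<theta>\<in>Theta H b. F \<theta> * of_bool (fst \<theta> l = a))
      = (\<Sum>\<theta>\<in>Theta H b. F \<theta> * of_bool (fst \<theta> l = a) + F \<theta> * of_bool (fst \<theta> l = (\<not> a)))"
    by (simp add: sum.distrib)
  also have "\<dots> = (\<Sum>\<theta>\<in>Theta H b. F \<theta>)"
    by (intro sum.cong) auto
  finally show ?thesis
    by simp
qed

definition follows :: "(nat \<times> bool) list \<Rightarrow> (nat \<Rightarrow> bool) \<Rightarrow> bool" where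
  "follows cs p \<longleftrightarrow> (\<forall>la\<in>set cs. p (fst la) = snd la)"

lemma sum_follows:
  fixes F :: "(nat \<Rightarrow> nat set) \<Rightarrow> real"
  assumes "distinct (map fst cs)" and "\<forall>la\<in>set cs. 1 \<le> fst la \<and> fst la < H"
  shows "(\<Sum>\<theta>\<in>Theta H b. of_bool (follows cs (fst \<theta>)) * F (snd \<theta>))
       = (\<Sum>\<theta>\<in>Theta H b. F (snd \<theta>)) / 2 ^ length cs"
  using assms
proof (induction cs)
  case (Cons la cs)
  obtain l a where la: "la = (l, a)"
    by fastforce
  have l: "1 \<le> l" "l < H" and l_notin: "l \<notin> fst ` set cs"
    using Cons.prems la by auto
  have "(\<Sum>\<theta>\<in>Theta H b. of_bool (follows (la # cs) (fst \<theta>)) * F (snd \<theta>))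
      = (\<Sum>\<theta>\<in>Theta H b. (of_bool (follows cs (fst \<theta>)) * F (snd \<theta>)) * of_bool (fst \<theta> l = a))"
    by (intro sum.cong) (auto simp: follows_def la)
  also have "\<dots> = (\<Sum>\<theta>\<in>Theta H b. of_bool (follows cs (fst \<theta>)) * F (snd \<theta>)) / 2"
  proof (rule sum_action_eq_half[OF l])
    fix \<theta> :: param
    have "follows cs (fst (flip_action l \<theta>)) = follows cs (fst \<theta>)"
      using l_notin unfolding follows_def flip_action_def by (auto simp: image_iff)
    then show "of_bool (follows cs (fst (flip_action l \<theta>))) * F (snd (flip_action l \<theta>))
        = of_bool (follows cs (fst \<theta>)) * F (snd \<theta>)"
      by (simp add: flip_action_def)
  qed
  also have "\<dots> = (\<Sum>\<theta>\<in>Theta H b. F (snd \<theta>)) / 2 ^ length (la # cs)"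
    using Cons by simp
  finally show ?case .
qed (simp add: follows_def)

section \<open>Observations revealed by a history\<close>

definition answered :: "nat \<Rightarrow> history \<Rightarrow> nat set" where
  "answered l hs = (\<lambda>j. fst (snd (hs!j))) ` {j. j < length hs \<and> j mod H + 2 = l}"

definition seen :: "nat \<Rightarrow> history \<Rightarrow> nat set" where
  "seen l hs = (\<lambda>j. fst (fst (hs!j))) ` {j. j < length hs \<and> j mod H + 1 = l} \<union> answered l hs"

lemma layer_le_H: "j mod H + 1 \<le> H"
  using two_le_H by (simp add: Suc_leI)

lemma hist_prob_local:
  assumes \<theta>: "\<theta> \<in> Theta H b" and \<theta>': "\<theta>' \<in> Theta H b'" and actions: "fst \<theta>' = fst \<theta>"
    and local: "\<And>l i. l \<in> {2..H} \<Longrightarrow> i \<in> seen l hs \<Longrightarrow> i \<in> snd \<theta>' l \<longleftrightarrow> i \<in> snd \<theta> l"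
  shows "hist_prob \<theta>' hs = hist_prob \<theta> hs"
proof -
  have "pmf (resp H \<theta>' (j mod H + 1) (fst (hs!j))) (snd (hs!j))
      = pmf (resp H \<theta> (j mod H + 1) (fst (hs!j))) (snd (hs!j))" if j: "j < length hs" for j
  proof -
    define h where "h = j mod H + 1"
    have h: "1 \<le> h" "h \<le> H"
      unfolding h_def using layer_le_H by auto
    have query_seen: "fst (fst (hs!j)) \<in> seen h hs"
      unfolding seen_def h_def using j by blast
    have answer_seen: "fst (snd (hs!j)) \<in> seen (Suc h) hs"
      unfolding seen_def answered_def h_def using j by force
    show ?thesis
    proof (cases "h < H")
      case True
      have "on_path \<theta>' h (fst (hs!j)) = on_path \<theta> h (fst (hs!j))"
        unfolding on_path_def good_obs_def using actions local[OF _ query_seen] h by (cases "h = 1") auto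
      moreover have "fst (snd (hs!j)) \<in> snd \<theta>' (Suc h) \<longleftrightarrow> fst (snd (hs!j)) \<in> snd \<theta> (Suc h)"
        using local[OF _ answer_seen] h True by auto
      ultimately show ?thesis
        unfolding h_def[symmetric] pmf_resp_inner[OF \<theta> h(1) True] pmf_resp_inner[OF \<theta>' h(1) True] by simp
    next
      case False
      then have "h = H"
        using h by simp
      moreover have "fst (fst (hs!j)) \<in> snd \<theta>' H \<longleftrightarrow> fst (fst (hs!j)) \<in> snd \<theta> H"
        using local[OF _ query_seen] \<open>h = H\<close> two_le_H by auto
      ultimately show ?thesis
        unfolding h_def[symmetric] using actions by (simp add: pmf_resp_last)
    qed
  qed
  then show ?thesis
    unfolding hist_prob_eq_prod by (auto intro!: prod.cong)
qed

lemma hist_prob_swap_obs: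
  assumes "\<theta> \<in> Theta H b" and "l \<in> {2..H}" and "r < N" "r' < N"
    and "r \<notin> seen l hs" "r' \<notin> seen l hs"
  shows "hist_prob (swap_obs l r r' \<theta>) hs = hist_prob \<theta> hs"
proof (rule hist_prob_local[OF assms(1) swap_obs_Theta[OF assms(1-4)]])
  fix l' i assume i: "i \<in> seen l' hs"
  show "i \<in> snd (swap_obs l r r' \<theta>) l' \<longleftrightarrow> i \<in> snd \<theta> l'"
  proof (cases "l' = l")
    case True
    then have "i \<noteq> r" "i \<noteq> r'"
      using i assms(5,6) by auto
    then have "Transposition.transpose r r' i = i"
      by simp
    then show ?thesis
      using True by (simp add: mem_swap_obs_iff)
  qed (simp add: mem_swap_obs_iff)
qed simp

lemma card_steps_at_layer_le: "card {j. j < H * T \<and> j mod H = c} \<le> T"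
proof -
  have "{j. j < H * T \<and> j mod H = c} \<subseteq> (\<lambda>t. t * H + c) ` {..<T}"
  proof
    fix j assume j: "j \<in> {j. j < H * T \<and> j mod H = c}"
    have "j div H < T"
      using j two_le_H by (simp add: div_less_iff_less_mult mult.commute)
    moreover have "j = j div H * H + c"
      using j div_mult_mod_eq[of j H] by simp
    ultimately show "j \<in> (\<lambda>t. t * H + c) ` {..<T}"
      by blast
  qed
  then have "card {j. j < H * T \<and> j mod H = c} \<le> card ((\<lambda>t. t * H + c) ` {..<T})"
    by (intro card_mono) simp_all
  also have "\<dots> \<le> T"
    using card_image_le[of "{..<T}"] by simp
  finally show ?thesis .
qed

lemma
  assumes "length hs \<le> H * T"
  shows finite_seen: "finite (seen l hs)" and card_seen_le: "card (seen l hs) \<le> 2 * T"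
proof -
  let ?Q = "(\<lambda>j. fst (fst (hs!j))) ` {j. j < H * T \<and> j mod H = l - 1}"
  let ?A = "(\<lambda>j. fst (snd (hs!j))) ` {j. j < H * T \<and> j mod H = l - 2}"
  have sub: "seen l hs \<subseteq> ?Q \<union> ?A"
    unfolding seen_def answered_def using assms by force
  then show "finite (seen l hs)"
    by (rule finite_subset) simp
  have "card (seen l hs) \<le> card ?Q + card ?A"
    using card_mono[OF _ sub] card_Un_le[of ?Q ?A] by simp
  also have "\<dots> \<le> card {j. j < H * T \<and> j mod H = l - 1} + card {j. j < H * T \<and> j mod H = l - 2}"
    by (intro add_mono card_image_le) auto
  also have "\<dots> \<le> 2 * T"
    using card_steps_at_layer_le[of "l - 1"] card_steps_at_layer_le[of "l - 2"] by simp
  finally show "card (seen l hs) \<le> 2 * T" .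
qed

definition collision_free :: "history \<Rightarrow> bool" where
  "collision_free hs \<longleftrightarrow>
     (\<forall>j<length hs. j mod H + 1 < H \<longrightarrow> fst (snd (hs!j)) \<notin> seen (j mod H + 2) (take j hs))"

lemma collision_free_snoc:
  "collision_free (hs @ [x]) \<longleftrightarrow> collision_free hs \<and>
     (length hs mod H + 1 < H \<longrightarrow> fst (snd x) \<notin> seen (length hs mod H + 2) hs)"
  unfolding collision_free_def by (auto simp: nth_append less_Suc_eq)

lemma collision_free_take: "collision_free hs \<Longrightarrow> collision_free (take k hs)"
  unfolding collision_free_def by (auto simp: min_def)

lemma prob_resp_inner_in_le:
  assumes "\<theta> \<in> Theta H b" and "1 \<le> h" "h < H" and "finite S"
  shows "measure_pmf.prob (resp H \<theta> h qa) {r. fst r \<in> S} \<le> card S / K"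
proof -
  let ?A = "next_obs \<theta> h qa"
  have card_A: "K \<le> card ?A"
    by (rule K_le_card_next_obs[OF assms(1-3)])
  have "measure_pmf.prob (resp H \<theta> h qa) {r. fst r \<in> S} = card (?A \<inter> S) / card ?A"
    unfolding resp_inner_eq[OF assms(2,3)]
    using next_obs_nonempty[OF assms(1-3)] by (simp add: vimage_def measure_pmf_of_set finite_next_obs)
  also have "\<dots> \<le> card S / K"
    using card_A assms(4) by (intro frac_le) (auto simp: card_mono)
  finally show ?thesis .
qed

lemma prob_resp_collision_le:
  assumes \<theta>: "\<theta> \<in> Theta H b" and hs: "collision_free hs" "length hs < H * T"
  shows "measure_pmf.prob (resp H \<theta> (length hs mod H + 1) (q hs)) {r. \<not> collision_free (hs @ [(q hs, r)])}
    \<le> 2 * T / K"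
proof (cases "length hs mod H + 1 < H")
  case True
  let ?M = "resp H \<theta> (length hs mod H + 1) (q hs)" and ?S = "seen (length hs mod H + 2) hs"
  have "{r. \<not> collision_free (hs @ [(q hs, r)])} \<subseteq> {r. fst r \<in> ?S}"
    using hs(1) True by (auto simp: collision_free_snoc)
  then have "measure_pmf.prob ?M {r. \<not> collision_free (hs @ [(q hs, r)])} \<le> measure_pmf.prob ?M {r. fst r \<in> ?S}"
    by (intro measure_pmf.finite_measure_mono) simp_all
  also have "\<dots> \<le> card ?S / K"
    using hs(2) True by (intro prob_resp_inner_in_le[OF \<theta>] finite_seen) auto
  also have "\<dots> \<le> 2 * T / K"
    using hs(2) card_seen_le[of hs "length hs mod H + 2"] by (intro divide_right_mono) auto
  finally show ?thesis .
next
  case False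
  then have no_collision: "{r. \<not> collision_free (hs @ [(q hs, r)])} = {}"
    using hs(1) by (auto simp: collision_free_snoc)
  show ?thesis
    by (subst no_collision) simp
qed

lemma emeasure_run_collision_le:
  assumes \<theta>: "\<theta> \<in> Theta H b"
  shows "n \<le> H * T \<Longrightarrow>
    emeasure (measure_pmf (run H q \<theta> n)) {hs. \<not> collision_free hs} \<le> ennreal (n * (2 * T / K))"
proof (induction n)
  case (Suc n)
  define c :: real where "c = 2 * T / K"
  let ?E = "{hs. \<not> collision_free hs}"
  let ?step = "\<lambda>hs. map_pmf (\<lambda>r. hs @ [(q hs, r)]) (resp H \<theta> (n mod H + 1) (q hs))"
  have step: "emeasure (measure_pmf (?step hs)) ?E \<le> indicator ?E hs + ennreal c"
    if hs: "hs \<in> set_pmf (run H q \<theta> n)" for hs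
  proof (cases "collision_free hs")
    case True
    have "length hs = n"
      using hs by (simp add: set_pmf_run_iff)
    then have "emeasure (measure_pmf (?step hs)) ?E
        = ennreal (measure_pmf.prob (resp H \<theta> (length hs mod H + 1) (q hs)) {r. \<not> collision_free (hs @ [(q hs, r)])})"
      by (simp add: vimage_def measure_pmf.emeasure_eq_measure)
    also have "\<dots> \<le> ennreal c"
      unfolding c_def using True Suc.prems \<open>length hs = n\<close> by (intro ennreal_leI prob_resp_collision_le[OF \<theta>]) auto
    finally show ?thesis
      by (simp add: add_increasing)
  next
    case False
    have "emeasure (measure_pmf (?step hs)) ?E \<le> 1"
      by (rule measure_pmf.emeasure_le_1)
    then show ?thesis
      using False by (auto intro: add_increasing2)
  qed
  have "emeasure (measure_pmf (run H q \<theta> (Suc n))) ?E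
      = (\<integral>\<^sup>+hs. emeasure (measure_pmf (?step hs)) ?E \<partial>measure_pmf (run H q \<theta> n))"
    by simp
  also have "\<dots> \<le> (\<integral>\<^sup>+hs. indicator ?E hs + ennreal c \<partial>measure_pmf (run H q \<theta> n))"
    using step by (intro nn_integral_mono_AE) (simp add: AE_measure_pmf_iff)
  also have "\<dots> = emeasure (measure_pmf (run H q \<theta> n)) ?E + ennreal c"
    by (simp add: nn_integral_add measure_pmf.emeasure_space_1)
  also have "\<dots> \<le> ennreal (n * c) + ennreal c"
    using Suc by (simp add: c_def add_right_mono)
  also have "\<dots> = ennreal (n * c + c)"
    by (simp add: c_def ennreal_plus)
  also have "\<dots> = ennreal (Suc n * c)"
    by (simp add: distrib_right add.commute)
  finally show ?case
    unfolding c_def .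
qed (simp add: collision_free_def)

lemma prob_run_collision_le:
  "\<theta> \<in> Theta H b \<Longrightarrow> n \<le> H * T \<Longrightarrow>
    measure_pmf.prob (run H q \<theta> n) {hs. \<not> collision_free hs} \<le> n * (2 * T / K)"
  using emeasure_run_collision_le by (simp add: measure_pmf.emeasure_eq_measure)

section \<open>Averaging a history over the decoder\<close>

text \<open>Responses that can occur before the first goal query: at the last layer the response is
  then always \<open>(0, False)\<close>.\<close>

definition resp_range :: "nat \<Rightarrow> response set" where
  "resp_range l = (if l < H then (\<lambda>j. (j, False)) ` {..<N} else {(0, False)})"

definition admissible :: "history \<Rightarrow> bool" where
  "admissible hs \<longleftrightarrow> consistent q hs \<and> (\<forall>j<length hs. snd (hs!j) \<in> resp_range (j mod H + 1))"

lemma admissible_snoc: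
  "admissible (hs @ [x]) \<longleftrightarrow> admissible hs \<and> fst x = q hs \<and> snd x \<in> resp_range (length hs mod H + 1)"
  unfolding admissible_def consistent_snoc by (auto simp: nth_append less_Suc_eq)

lemma answered_snoc:
  "answered l (hs @ [x]) = answered l hs \<union> (if length hs mod H + 2 = l then {fst (snd x)} else {})"
proof -
  have "{j. j < length (hs @ [x]) \<and> j mod H + 2 = l}
      = {j. j < length hs \<and> j mod H + 2 = l} \<union> (if length hs mod H + 2 = l then {length hs} else {})"
    by (auto simp: less_Suc_eq)
  moreover have "(\<lambda>j. fst (snd ((hs @ [x])!j))) ` {j. j < length hs \<and> j mod H + 2 = l} = answered l hs"
    unfolding answered_def by (intro image_cong) (simp_all add: nth_append)
  ultimately show ?thesis
    unfolding answered_def[of l "hs @ [x]"] by simp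
qed

text \<open>A history of at most \<open>H * T\<close> steps has seen at most \<open>2 * T\<close> observations of each layer, so at
  least \<open>n_fresh\<close> observations of a layer are unseen and differ from one further excluded
  observation (the start of a trace).\<close>

definition n_fresh :: real where
  "n_fresh = real N - 2 * real T - 1"

definition chance :: "nat \<Rightarrow> real" where
  "chance k = (\<Prod>j<k. if j mod H + 1 < H then 1 / n_fresh else 1)"

lemma chance_Suc: "chance (Suc k) = chance k * (if k mod H + 1 < H then 1 / n_fresh else 1)"
  unfolding chance_def by simp

lemma chance_nonneg: "n_fresh > 0 \<Longrightarrow> chance k \<ge> 0"
  unfolding chance_def by (auto intro: prod_nonneg)

lemma n_fresh_le_card_fresh:
  assumes "length hs \<le> H * T" and "finite E" "card E \<le> 1"
  shows "n_fresh \<le> card ({..<N} - seen l hs - E)"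
proof -
  have "N - card (seen l hs) \<le> card ({..<N} - seen l hs)"
    using diff_card_le_card_Diff[OF finite_seen[OF assms(1)], of "{..<N}"] by simp
  moreover have "card ({..<N} - seen l hs) - card E \<le> card ({..<N} - seen l hs - E)"
    using diff_card_le_card_Diff[OF assms(2)] by simp
  ultimately have "N \<le> card ({..<N} - seen l hs - E) + card (seen l hs) + card E"
    by linarith
  then show ?thesis
    unfolding n_fresh_def using card_seen_le[OF assms(1), of l] assms(3) by linarith
qed

lemma sum_hist_prob_snoc_inner_le:
  fixes w :: "(nat \<Rightarrow> bool) \<Rightarrow> real"
  assumes w_nonneg: "\<And>p. w p \<ge> 0" and fresh_pos: "n_fresh > 0"
    and len: "length hs < H * T" and inner: "length hs mod H + 1 < H"
    and r: "r < N" "r \<notin> seen (length hs mod H + 2) hs"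
    and root: "length hs mod H + 2 = h0 \<Longrightarrow> r \<noteq> x0"
  defines "W \<equiv> \<lambda>\<theta>. w (fst \<theta>) * of_bool (good_obs \<theta> h0 x0)"
  shows "(\<Sum>\<theta>\<in>Theta H b. hist_prob \<theta> (hs @ [(q hs, (r, False))]) * W \<theta>)
       \<le> (\<Sum>\<theta>\<in>Theta H b. hist_prob \<theta> hs * W \<theta>) / n_fresh"
proof -
  define h where "h = length hs mod H + 1"
  have h: "1 \<le> h" "h < H"
    using inner unfolding h_def by auto
  define U where "U = {..<N} - seen (Suc h) hs - (if Suc h = h0 then {x0} else {})"
  have r_U: "r \<in> U" and U_sub: "U \<subseteq> {..<N}"
    using r root unfolding U_def h_def by auto
  have card_U: "n_fresh \<le> card U"
    unfolding U_def using len by (intro n_fresh_le_card_fresh) auto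
  have swap_inv: "hist_prob (swap_obs (Suc h) r r' \<theta>) hs * W (swap_obs (Suc h) r r' \<theta>) = hist_prob \<theta> hs * W \<theta>"
    if r': "r' \<in> U" and \<theta>: "\<theta> \<in> Theta H b" for r' \<theta>
  proof -
    have "hist_prob (swap_obs (Suc h) r r' \<theta>) hs = hist_prob \<theta> hs"
      using r_U r' h unfolding U_def by (intro hist_prob_swap_obs[OF \<theta>]) auto
    moreover have "good_obs (swap_obs (Suc h) r r' \<theta>) h0 x0 = good_obs \<theta> h0 x0"
      using r_U r' unfolding U_def good_obs_def by (auto simp: mem_swap_obs_iff)
    ultimately show ?thesis
      unfolding W_def by simp
  qed
  have "(\<Sum>\<theta>\<in>Theta H b. hist_prob \<theta> (hs @ [(q hs, (r, False))]) * W \<theta>)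
      = (\<Sum>\<theta>\<in>Theta H b. hist_prob \<theta> hs * W \<theta> * pmf (resp H \<theta> h (q hs)) (r, False))"
    unfolding h_def by (simp add: hist_prob_snoc ac_simps)
  then have "n_fresh * (\<Sum>\<theta>\<in>Theta H b. hist_prob \<theta> (hs @ [(q hs, (r, False))]) * W \<theta>)
      \<le> card U * (\<Sum>\<theta>\<in>Theta H b. hist_prob \<theta> hs * W \<theta> * pmf (resp H \<theta> h (q hs)) (r, False))"
    using card_U by (auto intro!: mult_right_mono sum_nonneg simp: W_def w_nonneg hist_prob_nonneg)
  also have "\<dots> \<le> (\<Sum>\<theta>\<in>Theta H b. hist_prob \<theta> hs * W \<theta>)"
    using swap_inv unfolding W_def
    by (intro sum_pmf_resp_fresh_le[OF h U_sub r_U]) (auto simp: w_nonneg hist_prob_nonneg)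
  finally show ?thesis
    using fresh_pos by (simp add: le_divide_eq mult.commute)
qed

lemma sum_hist_prob_good_obs_le:
  fixes w :: "(nat \<Rightarrow> bool) \<Rightarrow> real" and h0 x0 :: nat
  assumes w_nonneg: "\<And>p. w p \<ge> 0" and fresh_pos: "n_fresh > 0"
  defines "W \<equiv> \<lambda>\<theta>. w (fst \<theta>) * of_bool (good_obs \<theta> h0 x0)"
  shows "admissible hs \<Longrightarrow> collision_free hs \<Longrightarrow> x0 \<notin> answered h0 hs \<Longrightarrow> length hs \<le> H * T \<Longrightarrow>
    (\<Sum>\<theta>\<in>Theta H b. hist_prob \<theta> hs * W \<theta>) \<le> chance (length hs) * (\<Sum>\<theta>\<in>Theta H b. W \<theta>)"
proof (induction hs rule: rev_induct)
  case Nil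
  then show ?case
    by (simp add: hist_prob_Nil chance_def)
next
  case (snoc x hs)
  have W_nonneg: "W \<theta> \<ge> 0" for \<theta>
    unfolding W_def using w_nonneg by simp
  have x: "fst x = q hs" "snd x \<in> resp_range (length hs mod H + 1)"
    using snoc.prems(1) by (simp_all add: admissible_snoc)
  have IH: "(\<Sum>\<theta>\<in>Theta H b. hist_prob \<theta> hs * W \<theta>) \<le> chance (length hs) * (\<Sum>\<theta>\<in>Theta H b. W \<theta>)"
    using snoc by (intro snoc.IH) (auto simp: admissible_snoc collision_free_snoc answered_snoc)
  show ?case
  proof (cases "length hs mod H + 1 < H")
    case False
    have "(\<Sum>\<theta>\<in>Theta H b. hist_prob \<theta> (hs @ [x]) * W \<theta>) \<le> (\<Sum>\<theta>\<in>Theta H b. hist_prob \<theta> hs * W \<theta>)"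
      unfolding hist_prob_snoc
      by (intro sum_mono) (simp add: W_nonneg hist_prob_nonneg mult_left_le mult_right_mono pmf_le_1)
    then show ?thesis
      using IH False by (simp add: chance_Suc)
  next
    case True
    then obtain r where r: "snd x = (r, False)" "r < N"
      using x(2) unfolding resp_range_def by auto
    have x_eq: "x = (q hs, (r, False))"
      using x(1) r(1) by (metis prod.collapse)
    have "r \<notin> seen (length hs mod H + 2) hs"
      using snoc.prems(2) True r(1) by (simp add: collision_free_snoc)
    moreover have "length hs mod H + 2 = h0 \<Longrightarrow> r \<noteq> x0"
      using snoc.prems(3) r(1) by (auto simp: answered_snoc)
    ultimately have "(\<Sum>\<theta>\<in>Theta H b. hist_prob \<theta> (hs @ [x]) * W \<theta>)
        \<le> (\<Sum>\<theta>\<in>Theta H b. hist_prob \<theta> hs * W \<theta>) / n_fresh"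
      unfolding W_def x_eq using snoc.prems(4) True r(2)
      by (intro sum_hist_prob_snoc_inner_le[OF w_nonneg fresh_pos]) auto
    also have "\<dots> \<le> chance (length hs) * (\<Sum>\<theta>\<in>Theta H b. W \<theta>) / n_fresh"
      using IH fresh_pos by (simp add: divide_right_mono)
    finally show ?thesis
      using True by (simp add: chance_Suc)
  qed
qed

section \<open>Tracing a queried observation back\<close>

text \<open>\<open>trace hs h x\<close> follows the observation \<open>x\<close> of layer \<open>h\<close> back through the responses of \<open>hs\<close>
  that produced it. It returns the layers and actions of the producing queries, and the layer and
  observation where the trace starts: layer 1, or an observation that no response of \<open>hs\<close> produced.\<close>

definition origin :: "history \<Rightarrow> nat \<Rightarrow> nat \<Rightarrow> nat" where
  "origin hs l x = (SOME j. j < length hs \<and> j mod H + 2 = l \<and> fst (snd (hs!j)) = x)"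

lemma origin_answers:
  assumes "x \<in> answered l hs"
  shows "origin hs l x < length hs" "origin hs l x mod H + 2 = l" "fst (snd (hs ! origin hs l x)) = x"
proof -
  have "\<exists>j. j < length hs \<and> j mod H + 2 = l \<and> fst (snd (hs!j)) = x"
    using assms unfolding answered_def by auto
  then show "origin hs l x < length hs" "origin hs l x mod H + 2 = l" "fst (snd (hs ! origin hs l x)) = x"
    unfolding origin_def by (metis (mono_tags, lifting) someI_ex)+
qed

primrec trace :: "history \<Rightarrow> nat \<Rightarrow> nat \<Rightarrow> (nat \<times> bool) list \<times> nat \<times> nat" where
  "trace hs 0 x = ([], 0, x)"
| "trace hs (Suc m) x = (if m = 0 \<or> x \<notin> answered (Suc m) hs then ([], Suc m, x) else
     (let j = origin hs (Suc m) x in apfst ((#) (m, snd (fst (hs!j)))) (trace hs m (fst (fst (hs!j))))))"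

lemma trace_step:
  assumes "trace hs (Suc m) x = (cs, start)" and "m \<noteq> 0" and "x \<in> answered (Suc m) hs"
  obtains cs' where "cs = (m, snd (fst (hs ! origin hs (Suc m) x))) # cs'"
    and "trace hs m (fst (fst (hs ! origin hs (Suc m) x))) = (cs', start)"
  using assms by (cases "trace hs m (fst (fst (hs ! origin hs (Suc m) x)))") (auto simp: Let_def)

lemma trace_wf:
  assumes "trace hs h x = (cs, h0, x0)" and "1 \<le> h"
  shows "1 \<le> h0 \<and> h0 \<le> h \<and> (\<forall>la\<in>set cs. h0 \<le> fst la \<and> fst la < h) \<and> distinct (map fst cs)
    \<and> length cs = h - h0 \<and> (h0 = 1 \<or> 2 \<le> h0 \<and> x0 \<notin> answered h0 hs)"
  using assms
proof (induction h arbitrary: x cs)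
  case (Suc m)
  show ?case
  proof (cases "m = 0 \<or> x \<notin> answered (Suc m) hs")
    case True
    then show ?thesis
      using Suc.prems by auto
  next
    case False
    obtain cs' where "cs = (m, snd (fst (hs ! origin hs (Suc m) x))) # cs'"
      and "trace hs m (fst (fst (hs ! origin hs (Suc m) x))) = (cs', h0, x0)"
      by (rule trace_step[OF Suc.prems(1)]) (use False in auto)
    then show ?thesis
      using Suc.IH False by (fastforce simp: Suc_diff_le)
  qed
qed simp

lemma trace_sound:
  assumes \<theta>: "\<theta> \<in> Theta H b" and supp: "hs \<in> set_pmf (run H q \<theta> (length hs))"
  shows "trace hs h x = (cs, h0, x0) \<Longrightarrow> 1 \<le> h \<Longrightarrow> h \<le> H \<Longrightarrow> good_obs \<theta> h x \<Longrightarrow>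
    follows cs (fst \<theta>) \<and> good_obs \<theta> h0 x0"
proof (induction h arbitrary: x cs)
  case (Suc m)
  show ?case
  proof (cases "m = 0 \<or> x \<notin> answered (Suc m) hs")
    case True
    then show ?thesis
      using Suc.prems by (auto simp: follows_def)
  next
    case False
    define j where "j = origin hs (Suc m) x"
    obtain cs' where cs: "cs = (m, snd (fst (hs!j))) # cs'"
      and trace': "trace hs m (fst (fst (hs!j))) = (cs', h0, x0)"
      unfolding j_def by (rule trace_step[OF Suc.prems(1)]) (use False in auto)
    have j: "j < length hs" "j mod H + 1 = m" "fst (snd (hs!j)) = x"
      using origin_answers[of x "Suc m" hs] False unfolding j_def by auto
    have m: "1 \<le> m" "m < H"
      using False Suc.prems(3) by auto
    have "snd (hs!j) \<in> set_pmf (resp H \<theta> m (fst (hs!j)))"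
      using supp j(1,2) unfolding set_pmf_run_iff by blast
    then have "x \<in> snd \<theta> (Suc m) \<longleftrightarrow> on_path \<theta> m (fst (hs!j))"
      using j(3) by (auto simp: set_pmf_iff pmf_resp_inner[OF \<theta> m] split: if_splits)
    then have "good_obs \<theta> m (fst (fst (hs!j))) \<and> snd (fst (hs!j)) = fst \<theta> m"
      using Suc.prems(4) False unfolding on_path_def good_obs_def by simp
    then show ?thesis
      using Suc.IH[OF trace'] m unfolding cs by (simp add: follows_def)
  qed
qed simp

lemma sum_good_obs_le:
  assumes "2 \<le> h" "h \<le> H"
  shows "(\<Sum>\<theta>\<in>Theta H b. of_bool (good_obs \<theta> h x) :: real) \<le> card (Theta H b) / K"
proof (cases "x < N")
  case True
  have "real (card {..<N}) * (\<Sum>\<theta>\<in>Theta H b. (1::real) * of_bool (x \<in> snd \<theta> h))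
      \<le> real K * (\<Sum>\<theta>\<in>Theta H b. (1::real))"
    using assms True by (intro sum_swap_obs_good_le) auto
  then have "N * (\<Sum>\<theta>\<in>Theta H b. of_bool (good_obs \<theta> h x) :: real) \<le> K * card (Theta H b)"
    using assms unfolding good_obs_def by simp
  then show ?thesis
    unfolding nobs_eq_square by (simp add: field_simps)
next
  case False
  then have "(\<Sum>\<theta>\<in>Theta H b. of_bool (good_obs \<theta> h x) :: real) = 0"
    using assms good_obs_subset by (intro sum.neutral) (force simp: good_obs_def)
  then show ?thesis
    by simp
qed

lemma sum_follows_trace_le:
  assumes "trace hs H x = (cs, h0, x0)"
  shows "(\<Sum>\<theta>\<in>Theta H b. of_bool (follows cs (fst \<theta>)) * of_bool (good_obs \<theta> h0 x0))
       \<le> card (Theta H b) * (2 / K :: real)"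
proof -
  have wf: "1 \<le> h0" "h0 \<le> H" "\<forall>la\<in>set cs. 1 \<le> fst la \<and> fst la < H" "distinct (map fst cs)"
      "length cs = H - h0"
    using trace_wf[OF assms] two_le_H by auto
  have "(\<Sum>\<theta>\<in>Theta H b. of_bool (follows cs (fst \<theta>)) * of_bool (good_obs \<theta> h0 x0))
      = (\<Sum>\<theta>\<in>Theta H b. of_bool (good_obs \<theta> h0 x0)) / (2 ^ (H - h0) :: real)"
    using sum_follows[OF wf(4,3), where b = b and F = "\<lambda>G. of_bool (h0 = 1 \<or> x0 \<in> G h0)"] wf(5)
    by (simp add: good_obs_def)
  also have "\<dots> \<le> card (Theta H b) * (2 / K)"
  proof (cases "h0 = 1")
    case True
    then show ?thesis
      using two_le_H by (simp add: good_obs_def power_diff)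
  next
    case False
    have "(\<Sum>\<theta>\<in>Theta H b. of_bool (good_obs \<theta> h0 x0)) / 2 ^ (H - h0)
        \<le> (\<Sum>\<theta>\<in>Theta H b. of_bool (good_obs \<theta> h0 x0) :: real)"
      using sum_nonneg[of "Theta H b" "\<lambda>\<theta>. of_bool (good_obs \<theta> h0 x0) :: real"]
      by (simp add: divide_le_eq mult_le_cancel_left1)
    also have "\<dots> \<le> card (Theta H b) / K"
      using False wf by (intro sum_good_obs_le) auto
    also have "\<dots> \<le> card (Theta H b) * (2 / K)"
      by (simp add: divide_right_mono)
    finally show ?thesis .
  qed
  finally show ?thesis .
qed

lemma sum_hist_prob_query_good_le:
  assumes hs: "admissible hs" "collision_free hs" "length hs \<le> H * T" and fresh_pos: "n_fresh > 0"
  shows "(\<Sum>\<theta>\<in>Theta H b. hist_prob \<theta> hs * of_bool (fst (q hs) \<in> snd \<theta> H))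
       \<le> chance (length hs) * card (Theta H b) * (2 / K)"
proof -
  obtain cs h0 x0 where trace: "trace hs H (fst (q hs)) = (cs, h0, x0)"
    by (metis prod_cases3)
  have root: "x0 \<notin> answered h0 hs" if "h0 \<noteq> 1"
    using trace_wf[OF trace] two_le_H that by auto
  have "(\<Sum>\<theta>\<in>Theta H b. hist_prob \<theta> hs * of_bool (fst (q hs) \<in> snd \<theta> H))
      \<le> (\<Sum>\<theta>\<in>Theta H b. hist_prob \<theta> hs * (of_bool (follows cs (fst \<theta>)) * of_bool (good_obs \<theta> h0 x0)))"
  proof (intro sum_mono)
    fix \<theta> assume \<theta>: "\<theta> \<in> Theta H b"
    show "hist_prob \<theta> hs * of_bool (fst (q hs) \<in> snd \<theta> H)
        \<le> hist_prob \<theta> hs * (of_bool (follows cs (fst \<theta>)) * of_bool (good_obs \<theta> h0 x0))"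
    proof (cases "hist_prob \<theta> hs = 0 \<or> fst (q hs) \<notin> snd \<theta> H")
      case False
      then have "hs \<in> set_pmf (run H q \<theta> (length hs))"
        unfolding hist_prob_def by (simp add: set_pmf_iff)
      then have "follows cs (fst \<theta>) \<and> good_obs \<theta> h0 x0"
        using trace_sound[OF \<theta> _ trace] two_le_H False by (simp add: good_obs_def)
      then show ?thesis
        by (simp add: hist_prob_nonneg)
    qed (auto simp: hist_prob_nonneg)
  qed
  also have "\<dots> \<le> chance (length hs) * (\<Sum>\<theta>\<in>Theta H b. of_bool (follows cs (fst \<theta>)) * of_bool (good_obs \<theta> h0 x0))"
  proof (cases "h0 = 1")
    case True
    then show ?thesis
      using hs fresh_pos by (intro sum_hist_prob_good_obs_le) (auto simp: answered_def)
  next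
    case False
    then show ?thesis
      using hs fresh_pos root by (intro sum_hist_prob_good_obs_le) auto
  qed
  also have "\<dots> \<le> chance (length hs) * (card (Theta H b) * (2 / K))"
    using sum_follows_trace_le[OF trace] chance_nonneg[OF fresh_pos] by (rule mult_left_mono)
  finally show ?thesis
    by simp
qed

section \<open>Probability of a goal query\<close>

definition hists :: "nat \<Rightarrow> history set" where
  "hists k = {hs. length hs = k \<and> admissible hs}"

definition n_outcomes :: "nat \<Rightarrow> nat" where
  "n_outcomes k = (\<Prod>j<k. if j mod H + 1 < H then N else 1)"

lemma finite_resp_range: "finite (resp_range l)"
  unfolding resp_range_def by simp

lemma card_resp_range_le: "card (resp_range l) \<le> (if l < H then N else 1)"
  unfolding resp_range_def using card_image_le[of "{..<N}" "\<lambda>j. (j, False)"] by simp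

lemma hists_Suc_subset:
  "hists (Suc k) \<subseteq> (\<lambda>(hs, r). hs @ [(q hs, r)]) ` (hists k \<times> resp_range (k mod H + 1))"
proof
  fix hs assume hs: "hs \<in> hists (Suc k)"
  then obtain hs0 x where hs_eq: "hs = hs0 @ [x]"
    unfolding hists_def by (metis (mono_tags, lifting) length_Suc_conv_rev mem_Collect_eq)
  with hs have "hs0 \<in> hists k" "fst x = q hs0" "snd x \<in> resp_range (k mod H + 1)"
    unfolding hists_def by (auto simp: admissible_snoc)
  moreover have "hs = (\<lambda>(hs, r). hs @ [(q hs, r)]) (hs0, snd x)"
    using hs_eq \<open>fst x = q hs0\<close> by (cases x) auto
  ultimately show "hs \<in> (\<lambda>(hs, r). hs @ [(q hs, r)]) ` (hists k \<times> resp_range (k mod H + 1))"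
    by blast
qed

lemma finite_hists_card_le: "finite (hists k) \<and> card (hists k) \<le> n_outcomes k"
proof (induction k)
  case 0
  have "hists 0 = {[]}"
    unfolding hists_def admissible_def consistent_def by auto
  then show ?case
    by (simp add: n_outcomes_def)
next
  case (Suc k)
  let ?S = "(\<lambda>(hs, r). hs @ [(q hs, r)]) ` (hists k \<times> resp_range (k mod H + 1))"
  have fin: "finite ?S"
    using Suc finite_resp_range by simp
  have "card (hists (Suc k)) \<le> card ?S"
    by (rule card_mono[OF fin hists_Suc_subset])
  also have "\<dots> \<le> card (hists k \<times> resp_range (k mod H + 1))"
    using Suc finite_resp_range by (intro card_image_le) simp
  also have "\<dots> = card (hists k) * card (resp_range (k mod H + 1))"
    by (rule card_cartesian_product)
  also have "\<dots> \<le> n_outcomes k * (if k mod H + 1 < H then N else 1)"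
    using Suc card_resp_range_le by (intro mult_le_mono) auto
  also have "\<dots> = n_outcomes (Suc k)"
    unfolding n_outcomes_def by simp
  finally show ?case
    using finite_subset[OF hists_Suc_subset fin] by simp
qed

lemma n_fresh_le_N: "n_fresh \<le> N"
  unfolding n_fresh_def by simp

lemma n_outcomes_mult_chance_le:
  assumes fresh_pos: "n_fresh > 0"
  shows "n_outcomes k * chance k \<le> (N / n_fresh) ^ k"
proof -
  have "n_outcomes k * chance k
      = (\<Prod>j<k. (if j mod H + 1 < H then real N else 1) * (if j mod H + 1 < H then 1 / n_fresh else 1))"
    unfolding n_outcomes_def chance_def by (simp add: prod.distrib[symmetric] if_distrib cong: if_cong)
  also have "\<dots> \<le> (\<Prod>j<k. N / n_fresh)"
    using fresh_pos n_fresh_le_N by (intro prod_mono) auto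
  finally show ?thesis
    by simp
qed

definition queries_goal :: "param \<Rightarrow> history \<Rightarrow> bool" where
  "queries_goal \<theta> hs \<longleftrightarrow> (\<exists>j<length hs. j mod H + 1 = H \<and> fst (fst (hs!j)) \<in> snd \<theta> H)"

lemma mem_hists_if_not_queries_goal:
  assumes \<theta>: "\<theta> \<in> Theta H b" and supp: "hs \<in> set_pmf (run H q \<theta> k)" and no_goal: "\<not> queries_goal \<theta> hs"
  shows "hs \<in> hists k"
proof -
  have len: "length hs = k" and "consistent q hs"
    and resp: "\<And>j. j < k \<Longrightarrow> snd (hs!j) \<in> set_pmf (resp H \<theta> (j mod H + 1) (fst (hs!j)))"
    using supp unfolding set_pmf_run_iff consistent_def by auto
  have "snd (hs!j) \<in> resp_range (j mod H + 1)" if j: "j < k" for j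
  proof (cases "j mod H + 1 < H")
    case True
    then have "\<not> snd (snd (hs!j)) \<and> fst (snd (hs!j)) < N"
      using resp[OF j] by (auto simp: set_pmf_iff pmf_resp_inner[OF \<theta>] split: if_splits)
    then show ?thesis
      unfolding resp_range_def using True by (cases "snd (hs!j)") auto
  next
    case False
    then have layer: "j mod H + 1 = H"
      using layer_le_H[of j] by simp
    have "fst (fst (hs!j)) \<notin> snd \<theta> H"
      using no_goal j len layer unfolding queries_goal_def by auto
    then have "snd (hs!j) = (0, False)"
      using resp[OF j] unfolding layer by (auto simp: set_pmf_iff pmf_resp_last split: if_splits)
    then show ?thesis
      unfolding resp_range_def using layer by simp
  qed
  then show ?thesis
    unfolding hists_def admissible_def using len \<open>consistent q hs\<close> by simp
qed

definition first_goal_query :: "param \<Rightarrow> history set" where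
  "first_goal_query \<theta> = {hs. collision_free hs \<and> \<not> queries_goal \<theta> hs \<and> fst (q hs) \<in> snd \<theta> H}"

definition last_layer_steps :: "nat set" where
  "last_layer_steps = {k. k < H * T \<and> k mod H + 1 = H}"

lemma card_last_layer_steps_le: "card last_layer_steps \<le> T"
proof -
  have "last_layer_steps \<subseteq> {j. j < H * T \<and> j mod H = H - 1}"
    unfolding last_layer_steps_def by auto
  then have "card last_layer_steps \<le> card {j. j < H * T \<and> j mod H = H - 1}"
    by (intro card_mono) auto
  then show ?thesis
    using card_steps_at_layer_le[of "H - 1"] by simp
qed

lemma queries_goal_subset:
  assumes supp: "hs \<in> set_pmf (run H q \<theta> (H * T))" and goal: "queries_goal \<theta> hs"
  shows "hs \<in> {hs. \<not> collision_free hs} \<union> (\<Union>k\<in>last_layer_steps. take k -` first_goal_query \<theta>)"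
proof (cases "collision_free hs")
  case True
  define P where "P = (\<lambda>j. j < length hs \<and> j mod H + 1 = H \<and> fst (fst (hs!j)) \<in> snd \<theta> H)"
  obtain k where Pk: "P k" and least: "\<And>j. j < k \<Longrightarrow> \<not> P j"
    using goal exists_least_iff[of P] unfolding queries_goal_def P_def by blast
  have len: "length hs = H * T"
    using supp by (simp add: set_pmf_run_iff)
  then have "k \<in> last_layer_steps"
    using Pk unfolding P_def last_layer_steps_def by simp
  have "fst (hs!k) = q (take k hs)"
    using supp Pk len unfolding set_pmf_run_iff P_def by auto
  then have "fst (q (take k hs)) \<in> snd \<theta> H"
    using Pk unfolding P_def by simp
  moreover have "\<not> queries_goal \<theta> (take k hs)"
    using least Pk unfolding queries_goal_def P_def by auto
  ultimately have "take k hs \<in> first_goal_query \<theta>"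
    unfolding first_goal_query_def using collision_free_take[OF True] by simp
  then show ?thesis
    using \<open>k \<in> last_layer_steps\<close> by blast
qed simp

lemma prob_queries_goal_le:
  "measure_pmf.prob (run H q \<theta> (H * T)) {hs. queries_goal \<theta> hs}
     \<le> measure_pmf.prob (run H q \<theta> (H * T)) {hs. \<not> collision_free hs}
       + (\<Sum>k\<in>last_layer_steps. measure_pmf.prob (run H q \<theta> k) (first_goal_query \<theta>))"
proof -
  let ?M = "run H q \<theta> (H * T)"
  let ?F = "\<lambda>k. take k -` first_goal_query \<theta>"
  have "measure_pmf.prob ?M {hs. queries_goal \<theta> hs} = measure_pmf.prob ?M ({hs. queries_goal \<theta> hs} \<inter> set_pmf ?M)"
    by (rule measure_Int_set_pmf[symmetric])
  also have "\<dots> \<le> measure_pmf.prob ?M ({hs. \<not> collision_free hs} \<union> (\<Union>k\<in>last_layer_steps. ?F k))"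
    using queries_goal_subset[of _ \<theta>] by (intro measure_pmf.finite_measure_mono) auto
  also have "\<dots> \<le> measure_pmf.prob ?M {hs. \<not> collision_free hs} + measure_pmf.prob ?M (\<Union>k\<in>last_layer_steps. ?F k)"
    by (rule measure_subadditive) (auto simp: measure_pmf.emeasure_finite)
  also have "measure_pmf.prob ?M (\<Union>k\<in>last_layer_steps. ?F k) \<le> (\<Sum>k\<in>last_layer_steps. measure_pmf.prob ?M (?F k))"
    by (rule measure_pmf.finite_measure_subadditive_finite) (auto simp: last_layer_steps_def)
  also have "(\<Sum>k\<in>last_layer_steps. measure_pmf.prob ?M (?F k))
      = (\<Sum>k\<in>last_layer_steps. measure_pmf.prob (run H q \<theta> k) (first_goal_query \<theta>))"
  proof (intro sum.cong refl)
    fix k assume "k \<in> last_layer_steps"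
    then have "map_pmf (take k) ?M = run H q \<theta> k"
      by (intro map_pmf_take_run) (simp add: last_layer_steps_def)
    then show "measure_pmf.prob ?M (?F k) = measure_pmf.prob (run H q \<theta> k) (first_goal_query \<theta>)"
      by (metis measure_map_pmf)
  qed
  finally show ?thesis
    by simp
qed

lemma prob_first_goal_query_le_sum:
  assumes \<theta>: "\<theta> \<in> Theta H b"
  shows "measure_pmf.prob (run H q \<theta> k) (first_goal_query \<theta>)
    \<le> (\<Sum>hs\<in>{hs \<in> hists k. collision_free hs}. hist_prob \<theta> hs * of_bool (fst (q hs) \<in> snd \<theta> H))"
proof -
  let ?M = "run H q \<theta> k" and ?S = "{hs \<in> hists k. collision_free hs}"
  have fin: "finite ?S"
    using finite_hists_card_le by simp
  have "measure_pmf.prob ?M (first_goal_query \<theta>) = measure_pmf.prob ?M (first_goal_query \<theta> \<inter> set_pmf ?M)"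
    by (rule measure_Int_set_pmf[symmetric])
  also have "\<dots> \<le> measure_pmf.prob ?M {hs \<in> ?S. fst (q hs) \<in> snd \<theta> H}"
    by (intro measure_pmf.finite_measure_mono)
       (auto simp: first_goal_query_def intro: mem_hists_if_not_queries_goal[OF \<theta>])
  also have "\<dots> = (\<Sum>hs\<in>{hs \<in> ?S. fst (q hs) \<in> snd \<theta> H}. pmf ?M hs)"
    by (intro measure_measure_pmf_finite finite_subset[OF _ fin]) auto
  also have "\<dots> = (\<Sum>hs\<in>{hs \<in> ?S. fst (q hs) \<in> snd \<theta> H}. hist_prob \<theta> hs)"
    by (intro sum.cong) (auto simp: hist_prob_def hists_def)
  also have "\<dots> = (\<Sum>hs\<in>?S. if fst (q hs) \<in> snd \<theta> H then hist_prob \<theta> hs else 0)"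
    by (rule sum.inter_filter[OF fin])
  also have "\<dots> = (\<Sum>hs\<in>?S. hist_prob \<theta> hs * of_bool (fst (q hs) \<in> snd \<theta> H))"
    by (intro sum.cong) auto
  finally show ?thesis .
qed

lemma sum_prob_first_goal_query_le:
  assumes fresh_pos: "n_fresh > 0" and fresh_large: "(N / n_fresh) ^ (H * T) \<le> 2" and k: "k < H * T"
  shows "(\<Sum>\<theta>\<in>Theta H b. measure_pmf.prob (run H q \<theta> k) (first_goal_query \<theta>)) \<le> card (Theta H b) * (4 / K)"
proof -
  let ?S = "{hs \<in> hists k. collision_free hs}"
  have "(\<Sum>\<theta>\<in>Theta H b. measure_pmf.prob (run H q \<theta> k) (first_goal_query \<theta>))
      \<le> (\<Sum>\<theta>\<in>Theta H b. \<Sum>hs\<in>?S. hist_prob \<theta> hs * of_bool (fst (q hs) \<in> snd \<theta> H))"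
    by (intro sum_mono prob_first_goal_query_le_sum)
  also have "\<dots> = (\<Sum>hs\<in>?S. \<Sum>\<theta>\<in>Theta H b. hist_prob \<theta> hs * of_bool (fst (q hs) \<in> snd \<theta> H))"
    by (rule sum.swap)
  also have "\<dots> \<le> (\<Sum>hs\<in>?S. chance k * card (Theta H b) * (2 / K))"
    using k fresh_pos sum_hist_prob_query_good_le by (intro sum_mono) (auto simp: hists_def)
  also have "\<dots> = card ?S * (chance k * card (Theta H b) * (2 / K))"
    by simp
  also have "\<dots> \<le> n_outcomes k * (chance k * card (Theta H b) * (2 / K))"
    using finite_hists_card_le[of k] card_mono[of "hists k" ?S] chance_nonneg[OF fresh_pos, of k]
    by (intro mult_right_mono) auto
  also have "\<dots> = (n_outcomes k * chance k) * (card (Theta H b) * (2 / K))"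
    by (simp only: mult.assoc)
  also have "\<dots> \<le> 2 * (card (Theta H b) * (2 / K))"
  proof -
    have "(N / n_fresh) ^ k \<le> (N / n_fresh) ^ (H * T)"
      using k fresh_pos n_fresh_le_N by (intro power_increasing) auto
    then have "n_outcomes k * chance k \<le> (N / n_fresh) ^ (H * T)"
      using n_outcomes_mult_chance_le[OF fresh_pos, of k] by linarith
    then show ?thesis
      using fresh_large by (intro mult_right_mono) auto
  qed
  finally show ?thesis
    by (simp add: mult.commute)
qed

lemma sum_prob_queries_goal_le:
  assumes fresh_pos: "n_fresh > 0" and fresh_large: "(N / n_fresh) ^ (H * T) \<le> 2"
  shows "(\<Sum>\<theta>\<in>Theta H b. measure_pmf.prob (run H q \<theta> (H * T)) {hs. queries_goal \<theta> hs})
     \<le> card (Theta H b) * (H * T * (2 * T / K) + T * (4 / K))"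
proof -
  have "(\<Sum>\<theta>\<in>Theta H b. measure_pmf.prob (run H q \<theta> (H * T)) {hs. queries_goal \<theta> hs})
     \<le> (\<Sum>\<theta>\<in>Theta H b. measure_pmf.prob (run H q \<theta> (H * T)) {hs. \<not> collision_free hs}
       + (\<Sum>k\<in>last_layer_steps. measure_pmf.prob (run H q \<theta> k) (first_goal_query \<theta>)))"
    by (intro sum_mono prob_queries_goal_le)
  also have "\<dots> = (\<Sum>\<theta>\<in>Theta H b. measure_pmf.prob (run H q \<theta> (H * T)) {hs. \<not> collision_free hs})
       + (\<Sum>k\<in>last_layer_steps. \<Sum>\<theta>\<in>Theta H b. measure_pmf.prob (run H q \<theta> k) (first_goal_query \<theta>))"
    by (simp only: sum.distrib sum.swap[of _ "Theta H b" last_layer_steps])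
  also have "\<dots> \<le> (\<Sum>\<theta>\<in>Theta H b. H * T * (2 * T / K)) + (\<Sum>k\<in>last_layer_steps. card (Theta H b) * (4 / K))"
    using prob_run_collision_le[of _ b "H * T"] sum_prob_first_goal_query_le[OF fresh_pos fresh_large]
    by (intro add_mono sum_mono) (auto simp: last_layer_steps_def)
  also have "\<dots> = card (Theta H b) * (H * T * (2 * T / K)) + card last_layer_steps * (card (Theta H b) * (4 / K))"
    by simp
  also have "\<dots> \<le> card (Theta H b) * (H * T * (2 * T / K)) + T * (card (Theta H b) * (4 / K))"
    using card_last_layer_steps_le by (intro add_left_mono mult_right_mono) auto
  finally show ?thesis
    by (simp add: algebra_simps)
qed

section \<open>Indistinguishability of the two parameter sets\<close>

lemma measure_law_uniform:
  "measure_pmf.prob (law H T q out (pmf_of_set (Theta H b))) A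
    = (\<Sum>\<theta>\<in>Theta H b. measure_pmf.prob (run H q \<theta> (H * T)) {hs. (hs, out hs) \<in> A}) / card (Theta H b)"
  unfolding law_def using finite_Theta Theta_nonempty two_le_H
  by (subst measure_bind_pmf_of_set) (auto simp: vimage_def)

lemma queries_goal_flip_action [simp]: "queries_goal (flip_action H \<theta>) hs = queries_goal \<theta> hs"
  unfolding queries_goal_def flip_action_def by simp

lemma pmf_run_flip_action_last:
  assumes \<theta>: "\<theta> \<in> Theta H b" and no_goal: "\<not> queries_goal \<theta> hs"
  shows "pmf (run H q (flip_action H \<theta>) n) hs = pmf (run H q \<theta> n) hs"
proof (cases "length hs = n")
  case True
  have \<theta>': "flip_action H \<theta> \<in> Theta H (\<not> b)"
    by (rule flip_action_last_Theta[OF \<theta>])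
  have "pmf (resp H (flip_action H \<theta>) (j mod H + 1) (fst (hs!j))) (snd (hs!j))
      = pmf (resp H \<theta> (j mod H + 1) (fst (hs!j))) (snd (hs!j))" if j: "j < length hs" for j
  proof (cases "j mod H + 1 < H")
    case True
    have "1 \<le> j mod H + 1"
      by simp
    moreover have "on_path (flip_action H \<theta>) (j mod H + 1) (fst (hs!j)) = on_path \<theta> (j mod H + 1) (fst (hs!j))"
      using True unfolding on_path_def good_obs_def flip_action_def by simp
    ultimately show ?thesis
      using pmf_resp_inner[OF \<theta> _ True] pmf_resp_inner[OF \<theta>' _ True] by (simp add: flip_action_def)
  next
    case False
    then have layer: "j mod H + 1 = H"
      using layer_le_H[of j] by simp
    then have "fst (fst (hs!j)) \<notin> snd \<theta> H"
      using no_goal j unfolding queries_goal_def by auto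
    then show ?thesis
      unfolding layer pmf_resp_last by (simp add: flip_action_def)
  qed
  then have "hist_prob (flip_action H \<theta>) hs = hist_prob \<theta> hs"
    unfolding hist_prob_eq_prod by (auto intro!: prod.cong)
  then show ?thesis
    using True unfolding hist_prob_def by simp
qed (simp add: pmf_run_length_neq)

lemma dTV_le_prob_queries_goal:
  defines "P \<equiv> \<lambda>\<theta>. measure_pmf.prob (run H q \<theta> (H * T)) {hs. queries_goal \<theta> hs}"
  shows "dTV (law H T q out (pmf_of_set (Theta H False))) (law H T q out (pmf_of_set (Theta H True)))
    \<le> ((\<Sum>\<theta>\<in>Theta H False. P \<theta>) + (\<Sum>\<theta>\<in>Theta H True. P \<theta>)) / card (Theta H False)"
proof (rule dTV_le)
  fix A
  define g where "g = (\<lambda>\<theta>. measure_pmf.prob (run H q \<theta> (H * T)) {hs. (hs, out hs) \<in> A})"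
  have reindex: "(\<Sum>\<theta>\<in>Theta H True. f \<theta>) = (\<Sum>\<theta>\<in>Theta H False. f (flip_action H \<theta>))" for f :: "param \<Rightarrow> real"
    using sum.reindex_bij_betw[OF bij_betw_flip_action_last, of f] by simp
  have same_card: "card (Theta H True) = card (Theta H False)"
    using bij_betw_same_card[OF bij_betw_flip_action_last] by simp
  have "\<bar>(\<Sum>\<theta>\<in>Theta H False. g \<theta>) - (\<Sum>\<theta>\<in>Theta H True. g \<theta>)\<bar>
      \<le> (\<Sum>\<theta>\<in>Theta H False. \<bar>g \<theta> - g (flip_action H \<theta>)\<bar>)"
    unfolding reindex sum_subtractf[symmetric] by (rule sum_abs)
  also have "\<dots> \<le> (\<Sum>\<theta>\<in>Theta H False. P \<theta> + P (flip_action H \<theta>))"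
    unfolding g_def P_def queries_goal_flip_action
    by (intro sum_mono measure_pmf_diff_le_if_pmf_eq_outside) (simp add: pmf_run_flip_action_last)
  also have "\<dots> = (\<Sum>\<theta>\<in>Theta H False. P \<theta>) + (\<Sum>\<theta>\<in>Theta H True. P \<theta>)"
    by (simp add: reindex sum.distrib)
  finally show "\<bar>measure_pmf.prob (law H T q out (pmf_of_set (Theta H False))) A
      - measure_pmf.prob (law H T q out (pmf_of_set (Theta H True))) A\<bar>
    \<le> ((\<Sum>\<theta>\<in>Theta H False. P \<theta>) + (\<Sum>\<theta>\<in>Theta H True. P \<theta>)) / card (Theta H False)"
    unfolding measure_law_uniform g_def[symmetric] same_card
    by (simp add: diff_divide_distrib[symmetric] divide_right_mono)
qed

lemma n_fresh_bounds:
  assumes small: "512 * real H * real T ^ 4 < 2 ^ H" and T: "1 \<le> T"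
  shows "n_fresh > 0" and "(N / n_fresh) ^ (H * T) \<le> 2"
proof -
  let ?K = "(2::real) ^ H"
  have N_eq: "real N = ?K * ?K"
    unfolding nobs_eq_square by simp
  have HT: "real H * real T * (2 * real T + 1) \<le> ?K / 2"
    by (rule steps_times_seen_le_half[OF assms])
  define x where "x = (2 * real T + 1) / real N"
  have N_pos: "real N > 0"
    using K_less_N by simp
  have fresh_eq: "n_fresh = real N * (1 - x)"
    unfolding n_fresh_def x_def using N_pos by (simp add: field_simps)
  have "real (H * T) * x = real H * real T * (2 * real T + 1) / real N"
    unfolding x_def by simp
  also have "\<dots> \<le> (?K / 2) / real N"
    using HT by (rule divide_right_mono) simp
  also have "\<dots> \<le> 1 / 2"
    unfolding N_eq by (simp add: field_simps)
  finally have HTx: "real (H * T) * x \<le> 1 / 2" .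
  have x_nonneg: "x \<ge> 0"
    unfolding x_def by simp
  have "1 \<le> H * T"
    using T two_le_H by simp
  then have "real 1 * x \<le> real (H * T) * x"
    using x_nonneg by (intro mult_right_mono of_nat_mono)
  then have x_less_1: "x < 1"
    using HTx by simp
  then show "n_fresh > 0"
    unfolding fresh_eq using N_pos by simp
  note x_nonneg
  moreover have "real N / n_fresh = 1 / (1 - x)"
    unfolding fresh_eq using N_pos x_less_1 by simp
  ultimately show "(N / n_fresh) ^ (H * T) \<le> 2"
    using inverse_one_minus_power_le_2[OF _ HTx] by simp
qed

lemma dTV_le_if_small:
  assumes small: "512 * real H * real T ^ 4 < 2 ^ H" and T: "1 \<le> T"
  shows "dTV (law H T q out (pmf_of_set (Theta H False))) (law H T q out (pmf_of_set (Theta H True)))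
    \<le> 512 * real H * real T ^ 4 / 2 ^ H"
proof -
  define X where "X = H * T * (2 * T / K) + T * (4 / K)"
  have card_pos: "card (Theta H False) > 0"
    using Theta_nonempty finite_Theta two_le_H by (simp add: card_gt_0_iff)
  have same_card: "card (Theta H True) = card (Theta H False)"
    using bij_betw_same_card[OF bij_betw_flip_action_last] by simp
  have "dTV (law H T q out (pmf_of_set (Theta H False))) (law H T q out (pmf_of_set (Theta H True)))
      \<le> (card (Theta H False) * X + card (Theta H True) * X) / card (Theta H False)"
    using n_fresh_bounds[OF assms] unfolding X_def
    by (intro order_trans[OF dTV_le_prob_queries_goal] divide_right_mono add_mono sum_prob_queries_goal_le) auto
  also have "\<dots> = (4 * real H * real T ^ 2 + 8 * real T) / 2 ^ H"
    unfolding same_card X_def using card_pos by (simp add: field_simps power2_eq_square)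
  also have "\<dots> \<le> 512 * real H * real T ^ 4 / 2 ^ H"
    using quadratic_le_quartic[of H T] two_le_H T by (intro divide_right_mono) auto
  finally show ?thesis .
qed

end

lemma law_zero_rounds: "law H 0 q out \<nu> = return_pmf ([], out [])"
  unfolding law_def by simp

lemma two_powr_minus_9: "2 powr (real H - 9) = 2 ^ H / (512::real)"
  by (simp add: powr_diff powr_realpow)

theorem lemma5:
  fixes H T :: nat
    and q :: "history \<Rightarrow> query" and out :: "history \<Rightarrow> bool list"
  assumes "H \<ge> 1"
    and "\<And>hs. fst (q hs) < nobs H"
  shows "dTV (law H T q out (pmf_of_set (Theta H False)))
             (law H T q out (pmf_of_set (Theta H True)))
         \<le> real T ^ 4 * real H / 2 powr (real H - 9)"
proof (cases "T = 0")
  case False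
  have bound_eq: "real T ^ 4 * real H / 2 powr (real H - 9) = 512 * real H * real T ^ 4 / 2 ^ H"
    by (simp add: two_powr_minus_9)
  show ?thesis
  proof (cases "512 * real H * real T ^ 4 < 2 ^ H")
    case small: True
    have "1 \<le> real T ^ 4"
      using False by simp
    then have "H \<noteq> 1"
      using small by auto
    then interpret hard_instance H T q
      using assms(1) by unfold_locales auto
    show ?thesis
      unfolding bound_eq using dTV_le_if_small small False by simp
  next
    case big: False
    then show ?thesis
      unfolding bound_eq using dTV_le_1 by (smt (verit) le_divide_eq_1 zero_less_power)
  qed
qed (simp add: law_zero_rounds dTV_self)

end
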